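(* Let $(G,\circ)$ be a finite rooted cavity-monotone network, $k\in\mathbb N$, and suppose the ball $[G,\circ]_{2k+2}$ (subgraph induced by vertices at distance at most $2k+2$ from $\circ$) is a tree. Then for every $t>0$, $$U_{\mu_\circ}\big(x^{2k}_{i\to\circ}(t):i\in\partial\circ\big)\le\mathbb E^t_G\big[|\mathcal F\cap E_\circ|\big]\le U_{\mu_\circ}\big(x^{2k+1}_{i\to\circ}(t):i\in\partial\circ\big),$$ where $\mathbf x^0(t)=\mathbf 0$ and $\mathbf x^{k+1}(t)=t\Gamma_G(\mathbf x^k(t))$.
   Context: Measures over subsets: for a finite set $E$, a measure is $\mu:2^E\to[0,\infty)$; $Z(\mathbf w)=\sum_{F\subseteq E}\mu(F)\mathbf w^F$, $\mathbf w^F=\prod_{e\in F}w_e$; the cavity ratio is $\Gamma^e_\mu(\mathbf w')=Z^{/e}(\mathbf w')/Z^{\setminus e}(\mathbf w')$ where $Z^{\setminus e}(\mathbf w')=\sum_{F\not\ni e}\mu(F)\mathbf w'^F$, $Z^{/e}(\mathbf w')=\sum_{F\not\ni e}\mu(F\cup\{e\})\mathbf w'^F$; for $\mathbf w\in[0,\infty)^E$ with $Z(\mathbf w)>0$, $\mathbb P^{\mathbf w}_\mu(\mathcal F=F)=\mu(F)\mathbf w^F/Z(\mathbf w)$ and $U_\mu(\mathbf w)=\mathbb E^{\mathbf w}_\mu|\mathcal F|$. $\mu$ is Rayleigh if for all $\mathbf w\in(0,\infty)^E$, $e\neq f$: $\mathbb P^{\mathbf w}_\mu(e,f\in\mathcal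 F)\le\mathbb P^{\mathbf w}_\mu(e\in\mathcal F)\mathbb P^{\mathbf w}_\mu(f\in\mathcal F)$; size-increasing if for all $\mathbf w\in(0,\infty)^E$, $e\in E$: $\mathbb E^{\mathbf w}_\mu[|\mathcal F|\mathbf 1_{e\in\mathcal F}]>\mathbb E^{\mathbf w}_\mu|\mathcal F|\,\mathbb P^{\mathbf w}_\mu(e\in\mathcal F)$; cavity-monotone if $\mu(\emptyset)>0$, Rayleigh and size-increasing. Networks: a network is a simple locally finite graph $G=(V,E)$ with, for each $i\in V$, a local measure $\mu_i$ over the subsets of $E_i$ (edges incident to $i$); cavity-monotone if every $\mu_i$ is; $\partial i$ is the set of neighbours of $i$. For finite $G$: global measure $\mu(F)=\prod_{i}\mu_i(F\cap E_i)$; $Z(G;t)=\sum_{F\subseteq E}\mu(F)t^{|F|}$; Gibbs–Boltzmann law $\mathbb P^t_G(\mathcal F=F)=\mu(F)t^{|F|}/Z(G;t)$. Configurations $\mathbf x\in[0,\infty)^{\vec E}$; cavity operator $\Gamma_G(\mathbf x)_{i\to j}=\Gamma^{ij}_{\mu_i}(x_{k\to i}:k\in\partial i\setminus\{j\})$ (the variable of $\mu_i$ on edge $ik$ set to $x_{k\to i}$). *)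

theory Defs
  imports Complex_Main
begin

text \<open>A measure over the subsets of a finite set E is a function mu :: 'e set => real,
  nonnegative on the subsets of E (its values outside Pow E are irrelevant).\<close>

definition is_measure :: "'e set \<Rightarrow> ('e set \<Rightarrow> real) \<Rightarrow> bool" where
  "is_measure E mu \<longleftrightarrow> finite E \<and> (\<forall>F\<subseteq>E. mu F \<ge> 0)"

definition Zm :: "'e set \<Rightarrow> ('e set \<Rightarrow> real) \<Rightarrow> ('e \<Rightarrow> real) \<Rightarrow> real" where
  "Zm E mu w = (\<Sum>F\<in>Pow E. mu F * (\<Prod>e\<in>F. w e))"

definition Em :: "'e set \<Rightarrow> ('e set \<Rightarrow> real) \<Rightarrow> ('e \<Rightarrow> real) \<Rightarrow> ('e set \<Rightarrow> real) \<Rightarrow> real" where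
  "Em E mu w g = (\<Sum>F\<in>Pow E. mu F * (\<Prod>e\<in>F. w e) * g F) / Zm E mu w"

definition Pm :: "'e set \<Rightarrow> ('e set \<Rightarrow> real) \<Rightarrow> ('e \<Rightarrow> real) \<Rightarrow> ('e set \<Rightarrow> bool) \<Rightarrow> real" where
  "Pm E mu w P = Em E mu w (\<lambda>F. if P F then 1 else 0)"

definition Um :: "'e set \<Rightarrow> ('e set \<Rightarrow> real) \<Rightarrow> ('e \<Rightarrow> real) \<Rightarrow> real" where
  "Um E mu w = Em E mu w (\<lambda>F. real (card F))"

definition Z_del :: "'e set \<Rightarrow> ('e set \<Rightarrow> real) \<Rightarrow> 'e \<Rightarrow> ('e \<Rightarrow> real) \<Rightarrow> real" where
  "Z_del E mu e w = (\<Sum>F\<in>Pow (E - {e}). mu F * (\<Prod>f\<in>F. w f))"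

definition Z_con :: "'e set \<Rightarrow> ('e set \<Rightarrow> real) \<Rightarrow> 'e \<Rightarrow> ('e \<Rightarrow> real) \<Rightarrow> real" where
  "Z_con E mu e w = (\<Sum>F\<in>Pow (E - {e}). mu (insert e F) * (\<Prod>f\<in>F. w f))"

definition cavity_ratio :: "'e set \<Rightarrow> ('e set \<Rightarrow> real) \<Rightarrow> 'e \<Rightarrow> ('e \<Rightarrow> real) \<Rightarrow> real" where
  "cavity_ratio E mu e w = Z_con E mu e w / Z_del E mu e w"

definition rayleigh :: "'e set \<Rightarrow> ('e set \<Rightarrow> real) \<Rightarrow> bool" where
  "rayleigh E mu \<longleftrightarrow> (\<forall>w. (\<forall>e\<in>E. w e > 0) \<longrightarrow>
     (\<forall>e\<in>E. \<forall>f\<in>E. e \<noteq> f \<longrightarrow>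
        Pm E mu w (\<lambda>F. e \<in> F \<and> f \<in> F) \<le> Pm E mu w (\<lambda>F. e \<in> F) * Pm E mu w (\<lambda>F. f \<in> F)))"

definition size_increasing :: "'e set \<Rightarrow> ('e set \<Rightarrow> real) \<Rightarrow> bool" where
  "size_increasing E mu \<longleftrightarrow> (\<forall>w. (\<forall>e\<in>E. w e > 0) \<longrightarrow>
     (\<forall>e\<in>E. Em E mu w (\<lambda>F. real (card F) * (if e \<in> F then 1 else 0))
              > Em E mu w (\<lambda>F. real (card F)) * Pm E mu w (\<lambda>F. e \<in> F)))"

definition cavity_monotone :: "'e set \<Rightarrow> ('e set \<Rightarrow> real) \<Rightarrow> bool" where
  "cavity_monotone E mu \<longleftrightarrow> is_measure E mu \<and> mu {} > 0 \<and> rayleigh E mu \<and> size_increasing E mu"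

definition simple_graph :: "'v set \<Rightarrow> ('v \<Rightarrow> 'v \<Rightarrow> bool) \<Rightarrow> bool" where
  "simple_graph V adj \<longleftrightarrow> (\<forall>i j. adj i j \<longrightarrow> adj j i \<and> i \<noteq> j \<and> i \<in> V \<and> j \<in> V)"

definition edges :: "('v \<Rightarrow> 'v \<Rightarrow> bool) \<Rightarrow> 'v set set" where
  "edges adj = {{i, j} | i j. adj i j}"

definition inc_edges :: "('v \<Rightarrow> 'v \<Rightarrow> bool) \<Rightarrow> 'v \<Rightarrow> 'v set set" where
  "inc_edges adj i = {e \<in> edges adj. i \<in> e}"

definition nbrs :: "('v \<Rightarrow> 'v \<Rightarrow> bool) \<Rightarrow> 'v \<Rightarrow> 'v set" where
  "nbrs adj i = {j. adj i j}"

definition other :: "'v \<Rightarrow> 'v set \<Rightarrow> 'v" where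
  "other i e = (THE k. e = {i, k})"

definition cavity_monotone_network :: "'v set \<Rightarrow> ('v \<Rightarrow> 'v \<Rightarrow> bool) \<Rightarrow> ('v \<Rightarrow> 'v set set \<Rightarrow> real) \<Rightarrow> bool" where
  "cavity_monotone_network V adj mu \<longleftrightarrow> (\<forall>i\<in>V. cavity_monotone (inc_edges adj i) (mu i))"

definition global_measure :: "'v set \<Rightarrow> ('v \<Rightarrow> 'v \<Rightarrow> bool) \<Rightarrow> ('v \<Rightarrow> 'v set set \<Rightarrow> real) \<Rightarrow> 'v set set \<Rightarrow> real" where
  "global_measure V adj mu F = (\<Prod>i\<in>V. mu i (F \<inter> inc_edges adj i))"

definition Z_net :: "'v set \<Rightarrow> ('v \<Rightarrow> 'v \<Rightarrow> bool) \<Rightarrow> ('v \<Rightarrow> 'v set set \<Rightarrow> real) \<Rightarrow> real \<Rightarrow> real" where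
  "Z_net V adj mu t = (\<Sum>F\<in>Pow (edges adj). global_measure V adj mu F * t ^ card F)"

definition E_net :: "'v set \<Rightarrow> ('v \<Rightarrow> 'v \<Rightarrow> bool) \<Rightarrow> ('v \<Rightarrow> 'v set set \<Rightarrow> real) \<Rightarrow> real \<Rightarrow> ('v set set \<Rightarrow> real) \<Rightarrow> real" where
  "E_net V adj mu t g = (\<Sum>F\<in>Pow (edges adj). global_measure V adj mu F * t ^ card F * g F) / Z_net V adj mu t"

text \<open>Configurations x :: 'v => 'v => real, with x i j = x_{i->j}. The weight placed by vertex i
  on its incident edge {i,k} is x_{k->i}.\<close>
definition local_weights :: "('v \<Rightarrow> 'v \<Rightarrow> real) \<Rightarrow> 'v \<Rightarrow> 'v set \<Rightarrow> real" where
  "local_weights x i = (\<lambda>e. x (other i e) i)"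

definition cavity_op :: "('v \<Rightarrow> 'v \<Rightarrow> bool) \<Rightarrow> ('v \<Rightarrow> 'v set set \<Rightarrow> real) \<Rightarrow> ('v \<Rightarrow> 'v \<Rightarrow> real) \<Rightarrow> 'v \<Rightarrow> 'v \<Rightarrow> real" where
  "cavity_op adj mu x i j =
     (if adj i j then cavity_ratio (inc_edges adj i) (mu i) {i, j} (local_weights x i) else 0)"

fun xiter :: "('v \<Rightarrow> 'v \<Rightarrow> bool) \<Rightarrow> ('v \<Rightarrow> 'v set set \<Rightarrow> real) \<Rightarrow> real \<Rightarrow> nat \<Rightarrow> 'v \<Rightarrow> 'v \<Rightarrow> real" where
  "xiter adj mu t 0 = (\<lambda>i j. 0)"
| "xiter adj mu t (Suc n) = (\<lambda>i j. t * cavity_op adj mu (xiter adj mu t n) i j)"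

definition ball_vertices :: "'v set \<Rightarrow> ('v \<Rightarrow> 'v \<Rightarrow> bool) \<Rightarrow> 'v \<Rightarrow> nat \<Rightarrow> 'v set" where
  "ball_vertices V adj r n = {v \<in> V. \<exists>m\<le>n. (adj ^^ m) r v}"

definition induced :: "('v \<Rightarrow> 'v \<Rightarrow> bool) \<Rightarrow> 'v set \<Rightarrow> 'v \<Rightarrow> 'v \<Rightarrow> bool" where
  "induced adj B = (\<lambda>u v. adj u v \<and> u \<in> B \<and> v \<in> B)"

definition connected_graph :: "'v set \<Rightarrow> ('v \<Rightarrow> 'v \<Rightarrow> bool) \<Rightarrow> bool" where
  "connected_graph B A \<longleftrightarrow> B \<noteq> {} \<and> (\<forall>u\<in>B. \<forall>v\<in>B. A\<^sup>*\<^sup>* u v)"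

definition has_cycle :: "'v set \<Rightarrow> ('v \<Rightarrow> 'v \<Rightarrow> bool) \<Rightarrow> bool" where
  "has_cycle B A \<longleftrightarrow> (\<exists>cs. length cs \<ge> 3 \<and> distinct cs \<and> set cs \<subseteq> B \<and>
      (\<forall>i<length cs. A (cs ! i) (cs ! ((i + 1) mod length cs))))"

definition is_tree :: "'v set \<Rightarrow> ('v \<Rightarrow> 'v \<Rightarrow> bool) \<Rightarrow> bool" where
  "is_tree B A \<longleftrightarrow> connected_graph B A \<and> \<not> has_cycle B A"

definition ball_is_tree :: "'v set \<Rightarrow> ('v \<Rightarrow> 'v \<Rightarrow> bool) \<Rightarrow> 'v \<Rightarrow> nat \<Rightarrow> bool" where
  "ball_is_tree V adj r n \<longleftrightarrow>
     is_tree (ball_vertices V adj r n) (induced adj (ball_vertices V adj r n))"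

end

theory Submission
  imports Defs
begin

text \<open>
  Condition on the configuration P of the edges leaving the ball.  Inside the ball
  the partition function factorises along the tree: for every vertex a of positive depth the
  sums Zwith P a and Zwithout P a over the subtree below a, with the edge to the parent present
  or absent, satisfy a recursion in which they appear as the homogenisation of the local
  partition functions of mu a, evaluated at the pairs (t Zwith P c, Zwithout P c) of the
  children c.  Two local facts drive everything: the mean size U of a size-increasing measure is
  increasing in the weights, and the cavity ratio of a Rayleigh measure is decreasing in them;
  both transfer to the homogenised polynomials.  By induction on m, the iterates x^m alternately
  bound t Zwith / Zwithout from below and from above along the edge to the parent, as long as
  the depth-m subtree stays inside the ball.  At the root this gives the two bounds on the
  conditional mean degree, and averaging over P gives the theorem.
\<close>

section \<open>Sums over subsets\<close>

lemma sum_Pow_insert: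
  assumes "finite C" "i \<notin> C"
  shows "(\<Sum>F\<in>Pow (insert i C). h F) = (\<Sum>F\<in>Pow C. h F) + (\<Sum>F\<in>Pow C. h (insert i F))"
proof -
  have "Pow C \<inter> insert i ` Pow C = {}" using assms by auto
  moreover have "inj_on (insert i) (Pow C)"
    using assms unfolding inj_on_def by (metis Diff_insert_absorb Pow_iff subsetD)
  ultimately show ?thesis using assms by (simp add: Pow_insert sum.union_disjoint sum.reindex)
qed

lemma sum_Pow_Un:
  assumes "finite A" "finite B" "A \<inter> B = {}"
  shows "(\<Sum>F\<in>Pow (A \<union> B). h F) = (\<Sum>X\<in>Pow A. \<Sum>Y\<in>Pow B. h (X \<union> Y))"
proof -
  have "(\<Sum>F\<in>Pow (A \<union> B). h F) = (\<Sum>p\<in>Pow A \<times> Pow B. h (fst p \<union> snd p))"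
    by (rule sum.reindex_bij_witness[where j="\<lambda>F. (F \<inter> A, F \<inter> B)" and i="\<lambda>p. fst p \<union> snd p"])
       (use assms in \<open>auto simp flip: Int_Un_distrib simp: Int_absorb2\<close>)
  then show ?thesis by (simp add: sum.cartesian_product case_prod_beta)
qed

lemma sum_Pow_UN_prod:
  fixes h :: "'i \<Rightarrow> 'e set \<Rightarrow> real"
  assumes "finite I" "\<And>i. i \<in> I \<Longrightarrow> finite (A i)"
    and "\<And>i j. i \<in> I \<Longrightarrow> j \<in> I \<Longrightarrow> i \<noteq> j \<Longrightarrow> A i \<inter> A j = {}"
  shows "(\<Sum>R\<in>Pow (\<Union>i\<in>I. A i). \<Prod>i\<in>I. h i (R \<inter> A i)) = (\<Prod>i\<in>I. \<Sum>S\<in>Pow (A i). h i S)"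
  using assms
proof (induction I rule: finite_induct)
  case empty
  then show ?case by simp
next
  case (insert j I)
  have disj: "A j \<inter> (\<Union>i\<in>I. A i) = {}" using insert by blast
  have restrict: "(\<Prod>i\<in>insert j I. h i ((X \<union> Y) \<inter> A i)) = h j X * (\<Prod>i\<in>I. h i (Y \<inter> A i))"
    if "X \<subseteq> A j" "Y \<subseteq> (\<Union>i\<in>I. A i)" for X Y
  proof -
    have "(X \<union> Y) \<inter> A i = Y \<inter> A i" if "i \<in> I" for i
      using insert.prems(2)[of j i] insert.hyps(2) that \<open>X \<subseteq> A j\<close> by auto
    moreover have "(X \<union> Y) \<inter> A j = X" using that disj by auto
    ultimately show ?thesis using insert.hyps by (simp cong: prod.cong)
  qed
  have fin: "finite (A j)" "finite (\<Union>i\<in>I. A i)" using insert by auto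
  have "(\<Sum>R\<in>Pow (\<Union>i\<in>insert j I. A i). \<Prod>i\<in>insert j I. h i (R \<inter> A i))
      = (\<Sum>X\<in>Pow (A j). \<Sum>Y\<in>Pow (\<Union>i\<in>I. A i). \<Prod>i\<in>insert j I. h i ((X \<union> Y) \<inter> A i))"
    using sum_Pow_Un[OF fin disj] by simp
  also have "\<dots> = (\<Sum>X\<in>Pow (A j). \<Sum>Y\<in>Pow (\<Union>i\<in>I. A i). h j X * (\<Prod>i\<in>I. h i (Y \<inter> A i)))"
    using restrict by (intro sum.cong refl) auto
  also have "\<dots> = (\<Sum>X\<in>Pow (A j). h j X) * (\<Sum>Y\<in>Pow (\<Union>i\<in>I. A i). \<Prod>i\<in>I. h i (Y \<inter> A i))"
    by (simp only: sum_product)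
  also have "\<dots> = (\<Sum>X\<in>Pow (A j). h j X) * (\<Prod>i\<in>I. \<Sum>S\<in>Pow (A i). h i S)"
    using insert by simp
  finally show ?case using insert.hyps by simp
qed

lemma prod_if_split:
  assumes "finite A"
  shows "(\<Prod>x\<in>A. if x \<in> R then f x else g x) = (\<Prod>x\<in>R \<inter> A. f x) * (\<Prod>x\<in>A - R. g x)"
  using prod.If_cases[OF assms, of "\<lambda>x. x \<in> R" f g] by (simp add: Int_commute Diff_eq)

section \<open>Multi-affine polynomials indexed by subsets\<close>

text \<open>All partition
  functions below are of this form; the homogenised version arises for the partial partition
  functions of subtrees, where p and q are the partial partition functions of the children with
  the connecting edge present and absent.\<close>

definition subset_poly :: "'e set \<Rightarrow> ('e set \<Rightarrow> real) \<Rightarrow> ('e \<Rightarrow> real) \<Rightarrow> real" where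
  "subset_poly C c w = (\<Sum>S\<in>Pow C. c S * (\<Prod>e\<in>S. w e))"

definition subset_hpoly :: "'e set \<Rightarrow> ('e set \<Rightarrow> real) \<Rightarrow> ('e \<Rightarrow> real) \<Rightarrow> ('e \<Rightarrow> real) \<Rightarrow> real" where
  "subset_hpoly C c p q = (\<Sum>S\<in>Pow C. c S * (\<Prod>e\<in>S. p e) * (\<Prod>e\<in>C - S. q e))"

lemma subset_poly_cong:
  assumes "\<And>S. S \<subseteq> C \<Longrightarrow> c S = c' S" "\<And>e. e \<in> C \<Longrightarrow> w e = w' e"
  shows "subset_poly C c w = subset_poly C c' w'"
  unfolding subset_poly_def using assms
  by (intro sum.cong refl arg_cong2[where f="(*)"] prod.cong) auto

lemma subset_hpoly_cong:
  assumes "\<And>S. S \<subseteq> C \<Longrightarrow> c S = c' S" "\<And>e. e \<in> C \<Longrightarrow> p e = p' e" "\<And>e. e \<in> C \<Longrightarrow> q e = q' e"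
  shows "subset_hpoly C c p q = subset_hpoly C c' p' q'"
  unfolding subset_hpoly_def using assms
  by (intro sum.cong refl arg_cong2[where f="(*)"] prod.cong) auto

lemma subset_poly_diff:
  "subset_poly C (\<lambda>S. a * c0 S - b * c1 S) w = a * subset_poly C c0 w - b * subset_poly C c1 w"
  unfolding subset_poly_def by (simp add: algebra_simps sum_subtractf sum_distrib_left)

lemma subset_hpoly_diff:
  "subset_hpoly C (\<lambda>S. a * c0 S - b * c1 S) p q = a * subset_hpoly C c0 p q - b * subset_hpoly C c1 p q"
  unfolding subset_hpoly_def by (simp add: algebra_simps sum_subtractf sum_distrib_left)

lemma subset_hpoly_add:
  "subset_hpoly C (\<lambda>S. c0 S + s * c1 S) p q = subset_hpoly C c0 p q + s * subset_hpoly C c1 p q"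
  unfolding subset_hpoly_def by (simp add: algebra_simps sum.distrib sum_distrib_left)

lemma subset_poly_nonneg:
  assumes "\<And>S. S \<subseteq> C \<Longrightarrow> 0 \<le> c S" "\<And>e. e \<in> C \<Longrightarrow> 0 \<le> w e"
  shows "0 \<le> subset_poly C c w"
  unfolding subset_poly_def using assms by (intro sum_nonneg mult_nonneg_nonneg prod_nonneg) auto

lemma subset_hpoly_nonneg:
  assumes "\<And>S. S \<subseteq> C \<Longrightarrow> 0 \<le> c S" "\<And>e. e \<in> C \<Longrightarrow> 0 \<le> p e" "\<And>e. e \<in> C \<Longrightarrow> 0 \<le> q e"
  shows "0 \<le> subset_hpoly C c p q"
  unfolding subset_hpoly_def using assms by (intro sum_nonneg mult_nonneg_nonneg prod_nonneg) auto

lemma subset_poly_pos: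
  assumes "finite C" "\<And>S. S \<subseteq> C \<Longrightarrow> 0 \<le> c S" "c {} > 0" "\<And>e. e \<in> C \<Longrightarrow> 0 \<le> w e"
  shows "0 < subset_poly C c w"
proof -
  have "0 < c {} * (\<Prod>e\<in>{}. w e)" using assms by simp
  also have "\<dots> \<le> subset_poly C c w" unfolding subset_poly_def
    using assms by (intro member_le_sum mult_nonneg_nonneg prod_nonneg) auto
  finally show ?thesis .
qed

lemma subset_poly_insert:
  assumes "finite C" "i \<notin> C"
  shows "subset_poly (insert i C) c w = subset_poly C c w + w i * subset_poly C (\<lambda>S. c (insert i S)) w"
proof -
  have "c (insert i S) * (\<Prod>e\<in>insert i S. w e) = w i * (c (insert i S) * (\<Prod>e\<in>S. w e))"
    if "S \<in> Pow C" for S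
    using that assms finite_subset by (subst prod.insert) auto
  then show ?thesis unfolding subset_poly_def sum_Pow_insert[OF assms] sum_distrib_left
    by (intro arg_cong2[where f="(+)"] sum.cong) auto
qed

lemma subset_poly_remove:
  assumes "finite C" "i \<in> C"
  shows "subset_poly C c w = subset_poly (C - {i}) c w + w i * subset_poly (C - {i}) (\<lambda>S. c (insert i S)) w"
  using subset_poly_insert[of "C - {i}" i c w] assms by (simp add: insert_absorb)

lemma subset_hpoly_insert:
  assumes "finite C" "i \<notin> C"
  shows "subset_hpoly (insert i C) c p q
       = q i * subset_hpoly C c p q + p i * subset_hpoly C (\<lambda>S. c (insert i S)) p q"
proof -
  have out: "c S * (\<Prod>e\<in>S. p e) * (\<Prod>e\<in>insert i C - S. q e) = q i * (c S * (\<Prod>e\<in>S. p e) * (\<Prod>e\<in>C - S. q e))"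
    if "S \<in> Pow C" for S
  proof -
    have "insert i C - S = insert i (C - S)" using that assms by auto
    then show ?thesis using assms by simp
  qed
  have "c (insert i S) * (\<Prod>e\<in>insert i S. p e) * (\<Prod>e\<in>insert i C - insert i S. q e)
      = p i * (c (insert i S) * (\<Prod>e\<in>S. p e) * (\<Prod>e\<in>C - S. q e))" if "S \<in> Pow C" for S
  proof -
    have "insert i C - insert i S = C - S" "i \<notin> S" "finite S" using that assms finite_subset by auto
    then show ?thesis by simp
  qed
  with out show ?thesis unfolding subset_hpoly_def sum_Pow_insert[OF assms] sum_distrib_left
    by (intro arg_cong2[where f="(+)"] sum.cong) auto
qed

lemma subset_poly_indicator:
  assumes "finite C" "i \<in> C"
  shows "subset_poly C (\<lambda>S. c S * (if i \<in> S then 1 else 0)) w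
       = w i * subset_poly (C - {i}) (\<lambda>S. c (insert i S)) w"
proof -
  have "subset_poly (C - {i}) (\<lambda>S. c S * (if i \<in> S then 1 else 0)) w = 0"
    unfolding subset_poly_def by (intro sum.neutral) auto
  then show ?thesis by (simp add: subset_poly_remove[OF assms])
qed

lemma subset_poly_upd:
  "i \<notin> C \<Longrightarrow> subset_poly C c (w(i := s)) = subset_poly C c w"
  by (rule subset_poly_cong) auto

text \<open>Polynomials are continuous; used to pass from positive to nonnegative weights.\<close>
lemma subset_poly_shift_tendsto:
  "((\<lambda>\<epsilon>. subset_poly C c (\<lambda>e. w e + \<epsilon>)) \<longlongrightarrow> subset_poly C c w) (at_right 0)"
  unfolding subset_poly_def by (auto intro!: tendsto_eq_intros)

lemma nonneg_at_right_limit: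
  fixes f :: "real \<Rightarrow> real"
  assumes "(f \<longlongrightarrow> f0) (at_right 0)" and "\<And>\<epsilon>. \<epsilon> > 0 \<Longrightarrow> 0 \<le> f \<epsilon>"
  shows "0 \<le> f0"
  by (rule tendsto_lowerbound[OF assms(1)])
     (auto intro: eventually_mono[OF eventually_at_right_less] assms(2))

lemma subset_poly_insert_upd:
  assumes "finite C" "i \<notin> C"
  shows "subset_poly (insert i C) c (w(i := s)) = subset_poly C (\<lambda>S. c S + s * c (insert i S)) w"
  unfolding subset_poly_insert[OF assms] subset_poly_upd[OF assms(2)]
  unfolding subset_poly_def by (simp add: algebra_simps sum.distrib sum_distrib_left)

section \<open>Transfer of nonnegativity to the homogenisation\<close>

lemma nonneg_slope:
  fixes A B :: real
  assumes "\<And>b. \<exists>s\<ge>b. 0 \<le> A + s * B"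
  shows "0 \<le> B"
proof (rule ccontr)
  assume "\<not> 0 \<le> B"
  then have B: "B < 0" by simp
  obtain s where s: "s \<ge> (\<bar>A\<bar> + 1) / (- B)" "0 \<le> A + s * B" using assms by blast
  have "s * B \<le> (\<bar>A\<bar> + 1) / (- B) * B" by (rule mult_right_mono_neg) (use s(1) B in auto)
  also have "\<dots> = - (\<bar>A\<bar> + 1)" using B by (simp add: divide_simps)
  finally show False using s(2) by linarith
qed

text \<open>This is how local monotonicity statements about weights are
  turned into statements about partial partition functions of subtrees.\<close>
lemma subset_hpoly_nonneg_region:
  assumes "finite C"
    and "\<And>w. \<forall>e\<in>C. R e (w e) \<Longrightarrow> 0 \<le> subset_poly C c w"
    and "\<forall>e\<in>C. 0 \<le> p e \<and> 0 \<le> q e \<and> (0 < q e \<longrightarrow> R e (p e / q e))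
                   \<and> (q e = 0 \<longrightarrow> p e = 0 \<or> (\<forall>b. \<exists>s\<ge>b. R e s))"
  shows "0 \<le> subset_hpoly C c p q"
  using assms
proof (induction C arbitrary: c rule: finite_induct)
  case empty
  then show ?case by (simp add: subset_poly_def subset_hpoly_def)
next
  case (insert i C)
  let ?H0 = "subset_hpoly C c p q" and ?H1 = "subset_hpoly C (\<lambda>S. c (insert i S)) p q"
  have affine: "0 \<le> ?H0 + s * ?H1" if s: "R i s" for s
  proof -
    have "0 \<le> subset_hpoly C (\<lambda>S. c S + s * c (insert i S)) p q"
    proof (rule insert.IH)
      fix w assume "\<forall>e\<in>C. R e (w e)"
      then have "0 \<le> subset_poly (insert i C) c (w(i := s))" using s insert.prems(1) by auto
      then show "0 \<le> subset_poly C (\<lambda>S. c S + s * c (insert i S)) w"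
        by (simp add: subset_poly_insert_upd[OF insert.hyps])
    qed (use insert.prems in auto)
    then show ?thesis by (simp add: subset_hpoly_add)
  qed
  have expand: "subset_hpoly (insert i C) c p q = q i * ?H0 + p i * ?H1"
    by (rule subset_hpoly_insert[OF insert.hyps])
  have pqi: "0 \<le> p i" "0 \<le> q i" "0 < q i \<longrightarrow> R i (p i / q i)"
    "q i = 0 \<longrightarrow> p i = 0 \<or> (\<forall>b. \<exists>s\<ge>b. R i s)" using insert.prems(2) by auto
  show ?case
  proof (cases "q i = 0")
    case True
    show ?thesis
    proof (cases "p i = 0")
      case False
      then have "\<forall>b. \<exists>s\<ge>b. R i s" using True pqi by auto
      then have "0 \<le> ?H1" using affine by (metis nonneg_slope)
      then show ?thesis using expand True pqi by simp
    qed (use expand True in simp)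
  next
    case False
    then have q: "0 < q i" using pqi by simp
    have "0 \<le> ?H0 + (p i / q i) * ?H1" using affine pqi q by blast
    then have "0 \<le> q i * (?H0 + (p i / q i) * ?H1)" using q by simp
    also have "\<dots> = subset_hpoly (insert i C) c p q" using expand q by (simp add: algebra_simps)
    finally show ?thesis .
  qed
qed

lemma subset_hpoly_nonneg_below:
  assumes "finite C" "\<And>w. \<forall>e\<in>C. 0 \<le> w e \<and> w e \<le> x e \<Longrightarrow> 0 \<le> subset_poly C c w"
    and "\<forall>e\<in>C. 0 \<le> p e \<and> 0 \<le> q e \<and> p e \<le> x e * q e"
  shows "0 \<le> subset_hpoly C c p q"
proof (rule subset_hpoly_nonneg_region[OF assms(1,2)])
  show "\<forall>e\<in>C. 0 \<le> p e \<and> 0 \<le> q e \<and> (0 < q e \<longrightarrow> 0 \<le> p e / q e \<and> p e / q e \<le> x e)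
      \<and> (q e = 0 \<longrightarrow> p e = 0 \<or> (\<forall>b. \<exists>s\<ge>b. 0 \<le> s \<and> s \<le> x e))"
    using assms(3) by (auto simp: divide_simps mult.commute intro: antisym)
qed

lemma subset_hpoly_nonneg_above:
  assumes "finite C" "\<And>w. \<forall>e\<in>C. x e \<le> w e \<Longrightarrow> 0 \<le> subset_poly C c w"
    and "\<forall>e\<in>C. 0 \<le> p e \<and> 0 \<le> q e \<and> x e * q e \<le> p e"
  shows "0 \<le> subset_hpoly C c p q"
proof (rule subset_hpoly_nonneg_region[OF assms(1,2)])
  have "\<exists>s\<ge>b. x e \<le> s" for e b by (intro exI[of _ "max b (x e)"]) simp
  then show "\<forall>e\<in>C. 0 \<le> p e \<and> 0 \<le> q e \<and> (0 < q e \<longrightarrow> x e \<le> p e / q e)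
      \<and> (q e = 0 \<longrightarrow> p e = 0 \<or> (\<forall>b. \<exists>s\<ge>b. x e \<le> s))"
    using assms(3) by (auto simp: divide_simps mult.commute)
qed

section \<open>Cavity-monotone local measures\<close>

lemma cavity_monotoneD:
  assumes "cavity_monotone E mu"
  shows "finite E" "\<And>F. F \<subseteq> E \<Longrightarrow> 0 \<le> mu F" "0 < mu {}" "rayleigh E mu" "size_increasing E mu"
  using assms unfolding cavity_monotone_def is_measure_def by auto

lemma Zm_eq: "Zm E mu w = subset_poly E mu w"
  unfolding Zm_def subset_poly_def ..

lemma Z_del_eq: "Z_del E mu e w = subset_poly (E - {e}) mu w"
  unfolding Z_del_def subset_poly_def ..

lemma Z_con_eq: "Z_con E mu e w = subset_poly (E - {e}) (\<lambda>S. mu (insert e S)) w"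
  unfolding Z_con_def subset_poly_def ..

lemma Em_eq: "Em E mu w g = subset_poly E (\<lambda>S. mu S * g S) w / Zm E mu w"
  unfolding Em_def subset_poly_def by (simp add: mult_ac)

lemma Zm_pos:
  assumes "cavity_monotone E mu" "\<forall>x\<in>E. 0 \<le> w x"
  shows "0 < Zm E mu w"
  unfolding Zm_eq using assms cavity_monotoneD[OF assms(1)] by (intro subset_poly_pos) auto

lemma Z_del_pos:
  assumes "cavity_monotone E mu" "\<forall>x\<in>E - {e}. 0 \<le> w x"
  shows "0 < Z_del E mu e w"
  unfolding Z_del_eq using assms cavity_monotoneD[OF assms(1)] by (intro subset_poly_pos) auto

lemma Z_con_nonneg:
  assumes "cavity_monotone E mu" "e \<in> E" "\<forall>x\<in>E - {e}. 0 \<le> w x"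
  shows "0 \<le> Z_con E mu e w"
  unfolding Z_con_eq using assms by (intro subset_poly_nonneg cavity_monotoneD(2)[OF assms(1)]) auto

lemma cavity_ratio_nonneg:
  assumes "cavity_monotone E mu" "e \<in> E" "\<forall>x\<in>E - {e}. 0 \<le> w x"
  shows "0 \<le> cavity_ratio E mu e w"
  unfolding cavity_ratio_def using Z_con_nonneg[OF assms] Z_del_pos[OF assms(1,3)] by simp

lemma cavity_ratio_cong:
  assumes "\<And>x. x \<in> E - {e} \<Longrightarrow> w x = w' x"
  shows "cavity_ratio E mu e w = cavity_ratio E mu e w'"
proof -
  have "subset_poly (E - {e}) c w = subset_poly (E - {e}) c w'" for c
    using assms by (intro subset_poly_cong) auto
  then show ?thesis unfolding cavity_ratio_def Z_del_eq Z_con_eq by simp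
qed

lemma Um_cong:
  assumes "\<And>x. x \<in> E \<Longrightarrow> w x = w' x"
  shows "Um E mu w = Um E mu w'"
proof -
  have "subset_poly E c w = subset_poly E c w'" for c
    using assms by (intro subset_poly_cong) auto
  then show ?thesis unfolding Um_def Em_eq Zm_eq by simp
qed

lemma coordinatewise_mono:
  fixes f :: "('e \<Rightarrow> real) \<Rightarrow> real"
  assumes "finite D"
    and step: "\<And>w i s s'. i \<in> D \<Longrightarrow> \<forall>x\<in>D. 0 \<le> w x \<Longrightarrow> 0 \<le> s \<Longrightarrow> s \<le> s'
                  \<Longrightarrow> f (w(i := s)) \<le> f (w(i := s'))"
    and local: "\<And>w w'. \<forall>x\<in>D. w x = w' x \<Longrightarrow> f w = f w'"
    and w: "\<forall>x\<in>D. 0 \<le> w x \<and> w x \<le> w' x"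
  shows "f w \<le> f w'"
proof -
  define mix where "mix B = (\<lambda>x. if x \<in> B then w' x else w x)" for B
  have "f w \<le> f (mix B)" if "B \<subseteq> D" for B
    using finite_subset[OF that \<open>finite D\<close>] that
  proof (induction B rule: finite_induct)
    case empty
    then show ?case by (simp add: mix_def)
  next
    case (insert i B)
    have nonneg: "\<forall>x\<in>D. 0 \<le> mix B x" using w unfolding mix_def by force
    have "f w \<le> f (mix B)" using insert by simp
    also have "mix B = (mix B)(i := w i)" using insert by (auto simp: mix_def)
    also have "f \<dots> \<le> f ((mix B)(i := w' i))" using insert w by (intro step nonneg) auto
    also have "(mix B)(i := w' i) = mix (insert i B)" by (auto simp: mix_def)
    finally show ?case .
  qed
  from this[of D] have "f w \<le> f (mix D)" by simp
  also have "f (mix D) = f w'" by (rule local) (simp add: mix_def)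
  finally show ?thesis .
qed

lemma frac_affine_mono:
  fixes n0 n1 d0 d1 s s' :: real
  assumes "0 < d0" "0 \<le> d1" "0 \<le> s" "s \<le> s'" "n0 * d1 \<le> n1 * d0"
  shows "(n0 + s * n1) / (d0 + s * d1) \<le> (n0 + s' * n1) / (d0 + s' * d1)"
proof -
  have pos: "0 < d0 + s * d1" "0 < d0 + s' * d1" using assms by (auto intro: add_pos_nonneg)
  have "0 \<le> (s' - s) * (n1 * d0 - n0 * d1)" using assms by (intro mult_nonneg_nonneg) auto
  also have "\<dots> = (n0 + s' * n1) * (d0 + s * d1) - (n0 + s * n1) * (d0 + s' * d1)"
    by (simp add: algebra_simps)
  finally show ?thesis using pos by (simp add: divide_simps)
qed

subsection \<open>Size-increasing measures: the mean size is monotone in the weights\<close>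

text \<open>Arithmetic behind the cross inequality: with Z = z0 + u z1 and A = a0 + u a1, the strict
  inequality (A / Z) (u z1 / Z) < u a1 / Z between expectations rearranges to a0 z1 < a1 z0.\<close>
lemma mult_less_from_frac:
  fixes X Y W Z :: real
  assumes "0 < Z" "X / Z * (Y / Z) < W / Z"
  shows "X * Y < W * Z"
proof -
  have "X / Z * (Y / Z) * (Z * Z) < W / Z * (Z * Z)"
    using assms by (intro mult_strict_right_mono) auto
  then show ?thesis using assms(1) by (simp add: field_simps)
qed

lemma cross_from_strict_covariance:
  fixes z0 z1 a0 a1 u :: real
  assumes "0 < u" "0 < z0 + u * z1"
    and "(a0 + u * a1) / (z0 + u * z1) * (u * z1 / (z0 + u * z1)) < u * a1 / (z0 + u * z1)"
  shows "a0 * z1 < a1 * z0"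
proof -
  have "(a0 + u * a1) * (u * z1) < u * a1 * (z0 + u * z1)"
    using assms(2,3) by (rule mult_less_from_frac)
  then have "u * (a0 * z1) < u * (a1 * z0)" by (simp add: algebra_simps)
  then show ?thesis using assms(1) by simp
qed

text \<open>Writing the size sum as A0 + w i * A1 and the partition function as Z_del + w i * Z_con
  (splitting according to whether i is present), size-increase at i is exactly the cross
  inequality A0 * Z_con < A1 * Z_del; by continuity it survives at nonnegative weights.\<close>
lemma size_increasing_cross_pos:
  assumes cm: "cavity_monotone E mu" and i: "i \<in> E" and w: "\<forall>x\<in>E. 0 < w x"
  shows "subset_poly (E - {i}) (\<lambda>S. mu S * real (card S)) w * Z_con E mu i w
       < subset_poly (E - {i}) (\<lambda>S. mu (insert i S) * real (card (insert i S))) w * Z_del E mu i w"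
proof -
  note fin = cavity_monotoneD(1)[OF cm]
  let ?A1 = "subset_poly (E - {i}) (\<lambda>S. mu (insert i S) * real (card (insert i S))) w"
  have Z: "Zm E mu w = Z_del E mu i w + w i * Z_con E mu i w"
    unfolding Zm_eq Z_del_eq Z_con_eq by (rule subset_poly_remove[OF fin i])
  have "Em E mu w (\<lambda>F. real (card F)) * Pm E mu w (\<lambda>F. i \<in> F)
      < Em E mu w (\<lambda>F. real (card F) * (if i \<in> F then 1 else 0))"
    using cavity_monotoneD(5)[OF cm] i w unfolding size_increasing_def by blast
  moreover have "Em E mu w (\<lambda>F. real (card F) * (if i \<in> F then 1 else 0)) = w i * ?A1 / Zm E mu w"
    unfolding Em_eq mult.assoc[symmetric] subset_poly_indicator[OF fin i] ..
  moreover have "Pm E mu w (\<lambda>F. i \<in> F) = w i * Z_con E mu i w / Zm E mu w"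
    unfolding Pm_def Em_eq subset_poly_indicator[OF fin i] Z_con_eq ..
  moreover have "Em E mu w (\<lambda>F. real (card F))
      = (subset_poly (E - {i}) (\<lambda>S. mu S * real (card S)) w + w i * ?A1) / Zm E mu w"
    unfolding Em_eq subset_poly_remove[OF fin i] ..
  moreover have "0 < Zm E mu w" using Zm_pos[OF cm] w by (simp add: less_imp_le)
  ultimately show ?thesis
    using w i unfolding Z by (intro cross_from_strict_covariance) auto
qed

lemma size_increasing_cross:
  assumes cm: "cavity_monotone E mu" and i: "i \<in> E" and w: "\<forall>x\<in>E - {i}. 0 \<le> w x"
  shows "subset_poly (E - {i}) (\<lambda>S. mu S * real (card S)) w * Z_con E mu i w
       \<le> subset_poly (E - {i}) (\<lambda>S. mu (insert i S) * real (card (insert i S))) w * Z_del E mu i w"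
proof -
  let ?A0 = "subset_poly (E - {i}) (\<lambda>S. mu S * real (card S))"
  let ?A1 = "subset_poly (E - {i}) (\<lambda>S. mu (insert i S) * real (card (insert i S)))"
  let ?Z0 = "subset_poly (E - {i}) mu" and ?Z1 = "subset_poly (E - {i}) (\<lambda>S. mu (insert i S))"
  let ?f = "\<lambda>v. ?A1 v * ?Z0 v - ?A0 v * ?Z1 v"
  let ?shift = "\<lambda>\<epsilon> x. w x + \<epsilon>"
  have "((\<lambda>\<epsilon>. ?f (?shift \<epsilon>)) \<longlongrightarrow> ?f w) (at_right 0)"
    by (intro tendsto_intros subset_poly_shift_tendsto)
  moreover have "0 \<le> ?f (?shift \<epsilon>)" if "0 < \<epsilon>" for \<epsilon>
  proof -
    define v where "v x = (if x = i then 1 else w x + \<epsilon>)" for x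
    have "\<forall>x\<in>E. 0 < v x" using w that by (auto simp: v_def add_nonneg_pos)
    from size_increasing_cross_pos[OF cm i this] have "0 \<le> ?f v"
      unfolding Z_del_eq Z_con_eq by simp
    moreover have "subset_poly (E - {i}) c v = subset_poly (E - {i}) c (?shift \<epsilon>)" for c
      by (rule subset_poly_cong) (auto simp: v_def)
    ultimately show ?thesis by simp
  qed
  ultimately have "0 \<le> ?f w" by (rule nonneg_at_right_limit)
  then show ?thesis unfolding Z_del_eq Z_con_eq by simp
qed

lemma Um_eq: "Um E mu w = subset_poly E (\<lambda>S. mu S * real (card S)) w / subset_poly E mu w"
  unfolding Um_def Em_eq Zm_eq ..

lemma Um_upd:
  assumes "finite E" "i \<in> E"
  shows "Um E mu (w(i := s))
    = (subset_poly (E - {i}) (\<lambda>S. mu S * real (card S)) w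
        + s * subset_poly (E - {i}) (\<lambda>S. mu (insert i S) * real (card (insert i S))) w)
      / (Z_del E mu i w + s * Z_con E mu i w)"
  unfolding Um_eq Z_del_eq Z_con_eq subset_poly_remove[OF assms]
  by (simp add: subset_poly_upd)

theorem Um_mono:
  assumes cm: "cavity_monotone E mu" and w: "\<forall>x\<in>E. 0 \<le> w x \<and> w x \<le> w' x"
  shows "Um E mu w \<le> Um E mu w'"
proof (rule coordinatewise_mono[OF cavity_monotoneD(1)[OF cm] _ _ w])
  fix v :: "_ \<Rightarrow> real" and i and s s' :: real
  assume i: "i \<in> E" and v: "\<forall>x\<in>E. 0 \<le> v x" and s: "0 \<le> s" "s \<le> s'"
  show "Um E mu (v(i := s)) \<le> Um E mu (v(i := s'))"
    unfolding Um_upd[OF cavity_monotoneD(1)[OF cm] i] using s v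
    by (intro frac_affine_mono Z_del_pos[OF cm] Z_con_nonneg[OF cm i] size_increasing_cross[OF cm i]) auto
next
  fix v v' :: "_ \<Rightarrow> real" assume "\<forall>x\<in>E. v x = v' x"
  then show "Um E mu v = Um E mu v'" using Um_cong[of E v v'] by simp
qed

subsection \<open>Rayleigh measures: the cavity ratio is antitone in the weights\<close>

text \<open>Arithmetic behind the Rayleigh cross inequality: with Z = qa + v qc + u (qb + v qd), the
  negative correlation u v qd / Z \<le> (u (qb + v qd) / Z) (v (qc + u qd) / Z) rearranges to
  qa qd \<le> qb qc.\<close>
lemma cross_from_negative_correlation:
  fixes qa qb qc qd u v :: real
  defines "Z \<equiv> qa + v * qc + u * (qb + v * qd)"
  assumes "0 < u" "0 < v" "0 < Z"
    and "u * (v * qd) / Z \<le> u * (qb + v * qd) / Z * (v * (qc + u * qd) / Z)"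
  shows "qa * qd \<le> qb * qc"
proof -
  have "u * (v * qd) * Z \<le> u * (qb + v * qd) * (v * (qc + u * qd))"
    using assms(4,5) by (simp add: field_simps power2_eq_square)
  then have "(u * v) * (qd * Z) \<le> (u * v) * ((qb + v * qd) * (qc + u * qd))"
    by (simp add: algebra_simps)
  then have "qd * Z \<le> (qb + v * qd) * (qc + u * qd)" using assms(2,3) by simp
  then show ?thesis unfolding Z_def by (simp add: algebra_simps)
qed

text \<open>Splitting the partition function according to the presence of e and f gives four
  polynomials in the remaining weights; negative correlation of e and f is equivalent to the
  cross inequality between them, which by continuity survives at nonnegative weights.\<close>
lemma rayleigh_cross_pos:
  assumes cm: "cavity_monotone E mu" and ef: "e \<in> E" "f \<in> E" "e \<noteq> f" and w: "\<forall>x\<in>E. 0 < w x"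
  shows "subset_poly (E - {e} - {f}) mu w * subset_poly (E - {e} - {f}) (\<lambda>S. mu (insert e (insert f S))) w
       \<le> subset_poly (E - {e} - {f}) (\<lambda>S. mu (insert e S)) w
         * subset_poly (E - {e} - {f}) (\<lambda>S. mu (insert f S)) w"
proof -
  note fin = cavity_monotoneD(1)[OF cm]
  have fin': "finite (E - {e})" "f \<in> E - {e}" using fin ef by auto
  let ?qA = "subset_poly (E - {e} - {f}) mu w"
  let ?qB = "subset_poly (E - {e} - {f}) (\<lambda>S. mu (insert e S)) w"
  let ?qC = "subset_poly (E - {e} - {f}) (\<lambda>S. mu (insert f S)) w"
  let ?qD = "subset_poly (E - {e} - {f}) (\<lambda>S. mu (insert e (insert f S))) w"
  have Zdel: "Z_del E mu e w = ?qA + w f * ?qC"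
    unfolding Z_del_eq by (rule subset_poly_remove[OF fin'])
  have Zcon_e: "Z_con E mu e w = ?qB + w f * ?qD"
    unfolding Z_con_eq by (rule subset_poly_remove[OF fin'])
  have Zcon_f: "Z_con E mu f w = ?qC + w e * ?qD"
  proof -
    have "E - {f} - {e} = E - {e} - {f}" by auto
    then show ?thesis unfolding Z_con_eq using fin ef
      by (simp add: subset_poly_remove[of "E - {f}" e] insert_commute)
  qed
  have Z: "Zm E mu w = Z_del E mu e w + w e * Z_con E mu e w"
    unfolding Zm_eq Z_del_eq Z_con_eq by (rule subset_poly_remove[OF fin ef(1)])
  have pair: "Pm E mu w (\<lambda>F. e \<in> F \<and> f \<in> F) = w e * (w f * ?qD) / Zm E mu w"
  proof -
    have "subset_poly E (\<lambda>S. mu S * (if e \<in> S \<and> f \<in> S then 1 else 0)) w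
        = subset_poly E (\<lambda>S. (mu S * (if f \<in> S then 1 else 0)) * (if e \<in> S then 1 else 0)) w"
      by (rule subset_poly_cong) auto
    also have "\<dots> = w e * subset_poly (E - {e}) (\<lambda>S. mu (insert e S) * (if f \<in> S then 1 else 0)) w"
      unfolding subset_poly_indicator[OF fin ef(1)] using ef(3)
      by (intro arg_cong2[where f="(*)"] subset_poly_cong) auto
    also have "\<dots> = w e * (w f * ?qD)" unfolding subset_poly_indicator[OF fin'] ..
    finally show ?thesis unfolding Pm_def Em_eq by simp
  qed
  have single: "Pm E mu w (\<lambda>F. x \<in> F) = w x * Z_con E mu x w / Zm E mu w" if "x \<in> E" for x
    unfolding Pm_def Em_eq Z_con_eq subset_poly_indicator[OF fin that] ..
  have "Pm E mu w (\<lambda>F. e \<in> F \<and> f \<in> F) \<le> Pm E mu w (\<lambda>F. e \<in> F) * Pm E mu w (\<lambda>F. f \<in> F)"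
    using cavity_monotoneD(4)[OF cm] ef w unfolding rayleigh_def by blast
  moreover have "0 < Zm E mu w" using Zm_pos[OF cm] w by (simp add: less_imp_le)
  ultimately show ?thesis
    unfolding pair single[OF ef(1)] single[OF ef(2)] Zcon_e Zcon_f Z Zdel
    using w ef by (intro cross_from_negative_correlation[of "w e" "w f"]) (auto simp: add.assoc)
qed

lemma rayleigh_cross:
  assumes cm: "cavity_monotone E mu" and ef: "e \<in> E" "f \<in> E" "e \<noteq> f"
    and w: "\<forall>x\<in>E - {e} - {f}. 0 \<le> w x"
  shows "subset_poly (E - {e} - {f}) mu w * subset_poly (E - {e} - {f}) (\<lambda>S. mu (insert e (insert f S))) w
       \<le> subset_poly (E - {e} - {f}) (\<lambda>S. mu (insert e S)) w
         * subset_poly (E - {e} - {f}) (\<lambda>S. mu (insert f S)) w"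
proof -
  let ?p = "\<lambda>c v. subset_poly (E - {e} - {f}) c v"
  let ?f = "\<lambda>v. ?p (\<lambda>S. mu (insert e S)) v * ?p (\<lambda>S. mu (insert f S)) v
             - ?p mu v * ?p (\<lambda>S. mu (insert e (insert f S))) v"
  let ?shift = "\<lambda>\<epsilon> x. w x + \<epsilon>"
  have "((\<lambda>\<epsilon>. ?f (?shift \<epsilon>)) \<longlongrightarrow> ?f w) (at_right 0)"
    by (intro tendsto_intros subset_poly_shift_tendsto)
  moreover have "0 \<le> ?f (?shift \<epsilon>)" if "0 < \<epsilon>" for \<epsilon>
  proof -
    define v where "v x = (if x \<in> E - {e} - {f} then w x + \<epsilon> else 1)" for x
    have "\<forall>x\<in>E. 0 < v x" using w that by (auto simp: v_def add_nonneg_pos)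
    from rayleigh_cross_pos[OF cm ef this] have "0 \<le> ?f v" by simp
    moreover have "?p c v = ?p c (?shift \<epsilon>)" for c
      by (rule subset_poly_cong) (auto simp: v_def)
    ultimately show ?thesis by simp
  qed
  ultimately have "0 \<le> ?f w" by (rule nonneg_at_right_limit)
  then show ?thesis by simp
qed

text \<open>As a function of one weight w f, the cavity ratio at e is a ratio of affine functions
  that decreases by the cross inequality.\<close>
lemma cavity_ratio_upd_antimono:
  assumes cm: "cavity_monotone E mu" and ef: "e \<in> E" "f \<in> E" "e \<noteq> f"
    and w: "\<forall>x\<in>E - {e}. 0 \<le> w x" and s: "0 \<le> s" "s \<le> s'"
  shows "cavity_ratio E mu e (w(f := s')) \<le> cavity_ratio E mu e (w(f := s))"
proof -
  note fin = cavity_monotoneD(1)[OF cm]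
  have fin': "finite (E - {e})" "f \<in> E - {e}" using fin ef by auto
  let ?qA = "subset_poly (E - {e} - {f}) mu w"
  let ?qB = "subset_poly (E - {e} - {f}) (\<lambda>S. mu (insert e S)) w"
  let ?qC = "subset_poly (E - {e} - {f}) (\<lambda>S. mu (insert f S)) w"
  let ?qD = "subset_poly (E - {e} - {f}) (\<lambda>S. mu (insert e (insert f S))) w"
  have ratio: "- cavity_ratio E mu e (w(f := t)) = (- ?qB + t * - ?qD) / (?qA + t * ?qC)" for t
    unfolding cavity_ratio_def Z_del_eq Z_con_eq subset_poly_remove[OF fin']
    by (simp add: subset_poly_upd minus_divide_left)
  have "0 < ?qA" using cavity_monotoneD[OF cm] w by (intro subset_poly_pos) auto
  moreover have "0 \<le> ?qC" using w ef by (intro subset_poly_nonneg cavity_monotoneD(2)[OF cm]) auto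
  moreover have "?qA * ?qD \<le> ?qB * ?qC" using rayleigh_cross[OF cm ef] w by simp
  ultimately have "- cavity_ratio E mu e (w(f := s)) \<le> - cavity_ratio E mu e (w(f := s'))"
    unfolding ratio using s by (intro frac_affine_mono) (auto simp: algebra_simps)
  then show ?thesis by simp
qed

theorem cavity_ratio_antimono:
  assumes cm: "cavity_monotone E mu" and e: "e \<in> E" and w: "\<forall>x\<in>E - {e}. 0 \<le> w x \<and> w x \<le> w' x"
  shows "cavity_ratio E mu e w' \<le> cavity_ratio E mu e w"
proof -
  have "- cavity_ratio E mu e w \<le> - cavity_ratio E mu e w'"
  proof (rule coordinatewise_mono[OF _ _ _ w])
    show "finite (E - {e})" using cavity_monotoneD(1)[OF cm] by simp
    fix v :: "_ \<Rightarrow> real" and f and s s' :: real assume "f \<in> E - {e}" "\<forall>x\<in>E - {e}. 0 \<le> v x" "0 \<le> s" "s \<le> s'"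
    then show "- cavity_ratio E mu e (v(f := s)) \<le> - cavity_ratio E mu e (v(f := s'))"
      using cavity_ratio_upd_antimono[OF cm e, of f v s s'] by auto
  next
    fix v v' :: "_ \<Rightarrow> real" assume "\<forall>x\<in>E - {e}. v x = v' x"
    then show "- cavity_ratio E mu e v = - cavity_ratio E mu e v'" using cavity_ratio_cong[of E e v v'] by simp
  qed
  then show ?thesis by simp
qed

lemma Um_hpoly_upper:
  assumes cm: "cavity_monotone E mu" and x: "\<forall>e\<in>E. 0 \<le> x e"
    and pq: "\<forall>e\<in>E. 0 \<le> p e \<and> 0 \<le> q e \<and> p e \<le> x e * q e"
  shows "subset_hpoly E (\<lambda>S. mu S * real (card S)) p q \<le> Um E mu x * subset_hpoly E mu p q"
proof -
  have "0 \<le> subset_hpoly E (\<lambda>S. Um E mu x * mu S - 1 * (mu S * real (card S))) p q"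
  proof (rule subset_hpoly_nonneg_below[OF cavity_monotoneD(1)[OF cm] _ pq])
    fix w assume w: "\<forall>e\<in>E. 0 \<le> w e \<and> w e \<le> x e"
    have "Um E mu w \<le> Um E mu x" using Um_mono[OF cm w] .
    moreover have "0 < subset_poly E mu w" using Zm_pos[OF cm] w unfolding Zm_eq by blast
    ultimately show "0 \<le> subset_poly E (\<lambda>S. Um E mu x * mu S - 1 * (mu S * real (card S))) w"
      unfolding subset_poly_diff Um_eq[of E mu w] by (simp add: divide_le_eq)
  qed
  then show ?thesis unfolding subset_hpoly_diff by simp
qed

lemma Um_hpoly_lower:
  assumes cm: "cavity_monotone E mu" and x: "\<forall>e\<in>E. 0 \<le> x e"
    and pq: "\<forall>e\<in>E. 0 \<le> p e \<and> 0 \<le> q e \<and> x e * q e \<le> p e"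
  shows "Um E mu x * subset_hpoly E mu p q \<le> subset_hpoly E (\<lambda>S. mu S * real (card S)) p q"
proof -
  have "0 \<le> subset_hpoly E (\<lambda>S. 1 * (mu S * real (card S)) - Um E mu x * mu S) p q"
  proof (rule subset_hpoly_nonneg_above[OF cavity_monotoneD(1)[OF cm] _ pq])
    fix w assume "\<forall>e\<in>E. x e \<le> w e"
    then have w: "\<forall>e\<in>E. 0 \<le> x e \<and> x e \<le> w e" using x by auto
    have "Um E mu x \<le> Um E mu w" using Um_mono[OF cm w] .
    moreover have "\<forall>e\<in>E. 0 \<le> w e" using w by (meson order_trans)
    then have "0 < subset_poly E mu w" using Zm_pos[OF cm] unfolding Zm_eq by blast
    ultimately show "0 \<le> subset_poly E (\<lambda>S. 1 * (mu S * real (card S)) - Um E mu x * mu S) w"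
      unfolding subset_poly_diff Um_eq[of E mu w] by (simp add: le_divide_eq)
  qed
  then show ?thesis unfolding subset_hpoly_diff by simp
qed

lemma cavity_hpoly_upper:
  assumes cm: "cavity_monotone E mu" and e: "e \<in> E" and x: "\<forall>f\<in>E - {e}. 0 \<le> x f"
    and pq: "\<forall>f\<in>E - {e}. 0 \<le> p f \<and> 0 \<le> q f \<and> x f * q f \<le> p f"
  shows "subset_hpoly (E - {e}) (\<lambda>S. mu (insert e S)) p q
       \<le> cavity_ratio E mu e x * subset_hpoly (E - {e}) mu p q"
proof -
  have "0 \<le> subset_hpoly (E - {e}) (\<lambda>S. cavity_ratio E mu e x * mu S - 1 * mu (insert e S)) p q"
  proof (rule subset_hpoly_nonneg_above[OF _ _ pq])
    show "finite (E - {e})" using cavity_monotoneD(1)[OF cm] by simp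
    fix w assume "\<forall>f\<in>E - {e}. x f \<le> w f"
    then have w: "\<forall>f\<in>E - {e}. 0 \<le> x f \<and> x f \<le> w f" using x by auto
    have "cavity_ratio E mu e w \<le> cavity_ratio E mu e x" using cavity_ratio_antimono[OF cm e w] .
    moreover have "\<forall>f\<in>E - {e}. 0 \<le> w f" using w by (meson order_trans)
    then have "0 < Z_del E mu e w" using Z_del_pos[OF cm] by blast
    ultimately show "0 \<le> subset_poly (E - {e}) (\<lambda>S. cavity_ratio E mu e x * mu S - 1 * mu (insert e S)) w"
      unfolding subset_poly_diff cavity_ratio_def[of E mu e w] Z_del_eq Z_con_eq by (simp add: divide_le_eq)
  qed
  then show ?thesis unfolding subset_hpoly_diff by simp
qed

lemma cavity_hpoly_lower:
  assumes cm: "cavity_monotone E mu" and e: "e \<in> E" and x: "\<forall>f\<in>E - {e}. 0 \<le> x f"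
    and pq: "\<forall>f\<in>E - {e}. 0 \<le> p f \<and> 0 \<le> q f \<and> p f \<le> x f * q f"
  shows "cavity_ratio E mu e x * subset_hpoly (E - {e}) mu p q
       \<le> subset_hpoly (E - {e}) (\<lambda>S. mu (insert e S)) p q"
proof -
  have "0 \<le> subset_hpoly (E - {e}) (\<lambda>S. 1 * mu (insert e S) - cavity_ratio E mu e x * mu S) p q"
  proof (rule subset_hpoly_nonneg_below[OF _ _ pq])
    show "finite (E - {e})" using cavity_monotoneD(1)[OF cm] by simp
    fix w assume w: "\<forall>f\<in>E - {e}. 0 \<le> w f \<and> w f \<le> x f"
    have "cavity_ratio E mu e x \<le> cavity_ratio E mu e w" using cavity_ratio_antimono[OF cm e w] .
    moreover have "0 < Z_del E mu e w" using Z_del_pos[OF cm] w by blast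
    ultimately show "0 \<le> subset_poly (E - {e}) (\<lambda>S. 1 * mu (insert e S) - cavity_ratio E mu e x * mu S) w"
      unfolding subset_poly_diff cavity_ratio_def[of E mu e w] Z_del_eq Z_con_eq by (simp add: le_divide_eq)
  qed
  then show ?thesis unfolding subset_hpoly_diff by simp
qed

section \<open>Breadth-first structure of a ball that is a tree\<close>

lemma has_cycleI:
  assumes "length cs \<ge> 3" "distinct cs" "set cs \<subseteq> B"
    and "successively A cs" "A (last cs) (hd cs)"
  shows "has_cycle B A"
  unfolding has_cycle_def
proof (intro exI[of _ cs] conjI allI impI)
  fix i assume i: "i < length cs"
  show "A (cs ! i) (cs ! ((i + 1) mod length cs))"
  proof (cases "Suc i < length cs")
    case True
    then show ?thesis using successively_nth[OF assms(4) True] by simp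
  next
    case False
    then have len: "length cs = Suc i" using i by simp
    then have "cs \<noteq> []" by auto
    then have "cs ! i = last cs" "cs ! ((i + 1) mod length cs) = hd cs"
      using len by (simp_all add: last_conv_nth hd_conv_nth)
    then show ?thesis using assms(5) by simp
  qed
qed (use assms in auto)

lemma other_eq: "u \<noteq> v \<Longrightarrow> other v {v, u} = u"
  unfolding other_def by (rule the_equality) (auto simp: doubleton_eq_iff)

locale ball_tree =
  fixes V :: "'v set" and adj :: "'v \<Rightarrow> 'v \<Rightarrow> bool" and r :: 'v and n :: nat
  assumes finite_V: "finite V" and graph: "simple_graph V adj" and root_V: "r \<in> V"
    and tree: "ball_is_tree V adj r n"
begin

lemma adj_sym: "adj u v \<Longrightarrow> adj v u"
  and adj_irrefl: "adj u v \<Longrightarrow> u \<noteq> v"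
  and adj_V: "adj u v \<Longrightarrow> u \<in> V \<and> v \<in> V"
  using graph unfolding simple_graph_def by blast+

definition reachable :: "'v \<Rightarrow> bool" where "reachable v \<longleftrightarrow> (\<exists>m. (adj ^^ m) r v)"
definition depth :: "'v \<Rightarrow> nat" where "depth v = (LEAST m. (adj ^^ m) r v)"
definition Ball :: "'v set" where "Ball = ball_vertices V adj r n"
definition parent :: "'v \<Rightarrow> 'v" where
  "parent v = (SOME u. adj u v \<and> reachable u \<and> Suc (depth u) = depth v)"

lemma depth_le: "(adj ^^ m) r v \<Longrightarrow> depth v \<le> m"
  unfolding depth_def by (rule Least_le)

lemma depth_walk: "reachable v \<Longrightarrow> (adj ^^ depth v) r v"
  unfolding depth_def reachable_def by (rule LeastI_ex)

lemma reachable_root: "reachable r"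
  unfolding reachable_def by (rule exI[of _ 0]) simp

lemma depth_root: "depth r = 0"
  using depth_le[of 0 r] by simp

lemma depth_0: "reachable v \<Longrightarrow> depth v = 0 \<Longrightarrow> v = r"
  using depth_walk[of v] by simp

lemma reachable_adj: "reachable u \<Longrightarrow> adj u v \<Longrightarrow> reachable v \<and> depth v \<le> Suc (depth u)"
  using relpowp_Suc_I[OF depth_walk] depth_le unfolding reachable_def by blast

lemma parent_exists:
  assumes v: "reachable v" and d: "depth v > 0"
  shows "\<exists>u. adj u v \<and> reachable u \<and> Suc (depth u) = depth v"
proof -
  obtain k where k: "depth v = Suc k" using d by (cases "depth v") auto
  then have "(adj ^^ Suc k) r v" using depth_walk[OF v] by simp
  then obtain u where u: "(adj ^^ k) r u" "adj u v" by (rule relpowp_Suc_E)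
  then have "reachable u" unfolding reachable_def by blast
  with u k show ?thesis using depth_le[OF u(1)] reachable_adj[of u v] by (intro exI[of _ u]) auto
qed

lemma parent_spec:
  "reachable v \<Longrightarrow> depth v > 0 \<Longrightarrow> adj (parent v) v \<and> reachable (parent v) \<and> Suc (depth (parent v)) = depth v"
  unfolding parent_def by (rule someI_ex) (rule parent_exists)

lemma Ball_iff: "v \<in> Ball \<longleftrightarrow> reachable v \<and> depth v \<le> n"
proof
  assume "v \<in> Ball"
  then obtain m where "m \<le> n" "(adj ^^ m) r v" unfolding Ball_def ball_vertices_def by blast
  then show "reachable v \<and> depth v \<le> n" unfolding reachable_def using depth_le by fastforce
next
  assume v: "reachable v \<and> depth v \<le> n"
  then have "v \<in> V" using depth_walk[of v] root_V adj_V by (cases "depth v") auto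
  then show "v \<in> Ball" unfolding Ball_def ball_vertices_def using depth_walk v by blast
qed

lemma root_Ball: "r \<in> Ball"
  using Ball_iff reachable_root depth_root by simp

lemma Ball_V: "Ball \<subseteq> V"
  unfolding Ball_def ball_vertices_def by auto

lemma finite_Ball: "finite Ball"
  using finite_subset[OF Ball_V finite_V] .

lemma parent_Ball:
  "v \<in> Ball \<Longrightarrow> depth v > 0 \<Longrightarrow> parent v \<in> Ball \<and> adj (parent v) v \<and> Suc (depth (parent v)) = depth v"
  using parent_spec Ball_iff by fastforce

definition ancestor :: "nat \<Rightarrow> 'v \<Rightarrow> 'v" where "ancestor j v = (parent ^^ j) v"

lemma ancestor_Ball: "v \<in> Ball \<Longrightarrow> j \<le> depth v \<Longrightarrow> ancestor j v \<in> Ball \<and> depth (ancestor j v) = depth v - j"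
proof (induction j)
  case (Suc j)
  then have "ancestor j v \<in> Ball" "depth (ancestor j v) = depth v - j" "0 < depth (ancestor j v)" by auto
  then show ?case using parent_Ball[of "ancestor j v"] by (simp add: ancestor_def, arith)
qed (simp add: ancestor_def)

lemma ancestor_adj: "v \<in> Ball \<Longrightarrow> j < depth v \<Longrightarrow> adj (ancestor (Suc j) v) (ancestor j v)"
  using ancestor_Ball[of v j] parent_Ball[of "ancestor j v"] by (simp add: ancestor_def)

lemma ancestor_depth: "v \<in> Ball \<Longrightarrow> ancestor (depth v) v = r"
  using ancestor_Ball[of v "depth v"] depth_0 Ball_iff by auto

abbreviation ball_adj :: "'v \<Rightarrow> 'v \<Rightarrow> bool" where "ball_adj \<equiv> induced adj Ball"

lemma ball_adj_sym: "ball_adj a b \<Longrightarrow> ball_adj b a"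
  unfolding induced_def using adj_sym by blast

definition ancestor_path :: "nat \<Rightarrow> 'v \<Rightarrow> 'v list" where
  "ancestor_path j v = map (\<lambda>i. ancestor i v) [0..<Suc j]"

lemma ancestor_path:
  assumes v: "v \<in> Ball" and j: "j \<le> depth v"
  shows "successively ball_adj (ancestor_path j v)" "distinct (ancestor_path j v)"
    "set (ancestor_path j v) = (\<lambda>i. ancestor i v) ` {..j}"
    "hd (ancestor_path j v) = v" "last (ancestor_path j v) = ancestor j v"
proof -
  have anc: "ancestor i v \<in> Ball \<and> depth (ancestor i v) = depth v - i" if "i \<le> j" for i
    using ancestor_Ball[OF v] that j by auto
  show "successively ball_adj (ancestor_path j v)"
    unfolding ancestor_path_def successively_conv_nth
    using anc ancestor_adj[OF v] j by (auto simp del: upt_Suc simp: induced_def intro: adj_sym)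
  show "distinct (ancestor_path j v)"
    unfolding ancestor_path_def distinct_map
  proof (intro conjI inj_onI)
    fix a b assume "a \<in> set [0..<Suc j]" "b \<in> set [0..<Suc j]" "ancestor a v = ancestor b v"
    then show "a = b" using anc[of a] anc[of b] j by auto
  qed simp
  show "set (ancestor_path j v) = (\<lambda>i. ancestor i v) ` {..j}"
    unfolding ancestor_path_def set_map set_upt atLeast0LessThan lessThan_Suc_atMost ..
  show "hd (ancestor_path j v) = v" "last (ancestor_path j v) = ancestor j v"
    unfolding ancestor_path_def by (simp_all add: ancestor_def hd_map del: upt_Suc) (simp add: hd_upt)
qed

text \<open>Two distinct vertices of equal depth are joined inside the ball by the path that climbs
  from u to their first common ancestor and descends to w; it stays at depth at most depth u.\<close>
lemma ancestor_bridge: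
  assumes u: "u \<in> Ball" and w: "w \<in> Ball" and uw: "u \<noteq> w" and d: "depth u = depth w"
  obtains zs where "successively ball_adj zs" "distinct zs" "set zs \<subseteq> Ball" "3 \<le> length zs"
    "hd zs = u" "last zs = w" "\<forall>z\<in>set zs. depth z \<le> depth u"
proof -
  let ?meet = "\<lambda>j. ancestor j u = ancestor j w"
  define J where "J = (LEAST j. ?meet j)"
  have top: "?meet (depth u)" using ancestor_depth[OF u] ancestor_depth[OF w] d by simp
  have meet: "?meet J" and J_le: "J \<le> depth u" and J_min: "\<And>j. j < J \<Longrightarrow> \<not> ?meet j"
    unfolding J_def using top by (auto intro: LeastI Least_le dest: not_less_Least)
  have J_pos: "0 < J" using meet uw by (cases J) (auto simp: ancestor_def)
  have depth_u: "ancestor i u \<in> Ball \<and> depth (ancestor i u) = depth u - i" if "i \<le> J" for i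
    using ancestor_Ball[OF u] that J_le by auto
  have depth_w: "ancestor i w \<in> Ball \<and> depth (ancestor i w) = depth u - i" if "i \<le> J" for i
    using ancestor_Ball[OF w] that J_le d by auto
  define up where "up = ancestor_path J u"
  define down where "down = rev (ancestor_path (J - 1) w)"
  note path_u = ancestor_path[OF u J_le]
  have "J - 1 \<le> depth w" using J_le d by simp
  note path_w = ancestor_path[OF w this]
  have down: "successively ball_adj down" "distinct down" "hd down = ancestor (J - 1) w" "last down = w"
    "set down = (\<lambda>i. ancestor i w) ` {..<J}"
  proof -
    show "successively ball_adj down"
      unfolding down_def successively_rev using path_w(1) by (rule successively_mono) (rule ball_adj_sym)
    have "{..J - 1} = {..<J}" using J_pos by auto
    then show "set down = (\<lambda>i. ancestor i w) ` {..<J}" unfolding down_def using path_w(3) by simp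
  qed (use path_w in \<open>simp_all add: down_def hd_rev last_rev\<close>)
  have ne: "up \<noteq> []" "down \<noteq> []" using J_pos down(5) unfolding up_def ancestor_path_def by auto
  have junction: "ball_adj (last up) (hd down)"
    using ancestor_adj[OF w, of "J - 1"] J_pos J_le d meet depth_u[of J] depth_w[of "J - 1"]
    unfolding up_def path_u(5) down(3) induced_def by simp
  have "set up \<inter> set down = {}"
  proof (rule ccontr)
    assume "set up \<inter> set down \<noteq> {}"
    then obtain a b where ab: "a \<le> J" "b < J" "ancestor a u = ancestor b w"
      using path_u(3) down(5) unfolding up_def by auto
    then have "a = b" using depth_u[of a] depth_w[of b] J_le by auto
    then show False using ab J_min by auto
  qed
  then show thesis
  proof (intro that[of "up @ down"])
    show "successively ball_adj (up @ down)"
      using path_u(1) down(1) junction ne unfolding up_def successively_append_iff by auto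
    show "3 \<le> length (up @ down)" "set (up @ down) \<subseteq> Ball" "\<forall>z\<in>set (up @ down). depth z \<le> depth u"
      using J_pos depth_u depth_w path_u(3) down(5) unfolding up_def down_def ancestor_path_def by auto
  qed (use path_u(2,4) down(2,4) ne in \<open>simp_all add: up_def\<close>)
qed

text \<open>Hence two distinct vertices of equal depth cannot also be joined by a path through deeper
  vertices: the two paths would close a cycle in the ball.\<close>
lemma same_depth_no_detour:
  assumes u: "u \<in> Ball" and w: "w \<in> Ball" and uw: "u \<noteq> w" and d: "depth u = depth w"
    and ys: "distinct ys" "set ys \<subseteq> Ball" "\<forall>y\<in>set ys. depth u < depth y"
    and walk: "successively ball_adj (w # ys @ [u])"
  shows False
proof -
  obtain zs where zs: "successively ball_adj zs" "distinct zs" "set zs \<subseteq> Ball" "3 \<le> length zs"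
    "hd zs = u" "last zs = w" "\<forall>z\<in>set zs. depth z \<le> depth u"
    using ancestor_bridge[OF u w uw d] .
  have "successively ball_adj ((w # ys) @ [u])" using walk by simp
  then have closing: "successively ball_adj (w # ys) \<and> ball_adj (last (w # ys)) u"
    unfolding successively_append_iff by simp
  then have ys_walk: "successively ball_adj ys" "ys \<noteq> [] \<Longrightarrow> ball_adj w (hd ys)"
    by (auto simp: successively_Cons)
  have ne: "zs \<noteq> []" using zs(4) by auto
  define cs where "cs = zs @ ys"
  have "successively ball_adj cs"
    using zs(1,6) ys_walk ne unfolding cs_def successively_append_iff by auto
  moreover have "last cs = last (w # ys)" "hd cs = u"
    using zs(5,6) ne unfolding cs_def by (cases ys; simp)+
  then have "ball_adj (last cs) (hd cs)" using closing by simp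
  moreover have "set zs \<inter> set ys = {}" using zs(7) ys(3) by fastforce
  then have "distinct cs" unfolding cs_def using zs(2) ys(1) by simp
  moreover have "length cs \<ge> 3" "set cs \<subseteq> Ball" using zs(3,4) ys(2) unfolding cs_def by auto
  ultimately have "has_cycle Ball ball_adj" by (intro has_cycleI)
  then show False using tree unfolding ball_is_tree_def is_tree_def Ball_def by simp
qed

lemma no_same_depth_edge:
  assumes "u \<in> Ball" "w \<in> Ball" "adj u w"
  shows "depth u \<noteq> depth w"
proof
  assume "depth u = depth w"
  moreover have "w \<noteq> u" using adj_irrefl[OF assms(3)] by simp
  ultimately show False using same_depth_no_detour[of w u "[]"] assms by (simp add: induced_def)
qed

lemma parent_unique:
  assumes v: "v \<in> Ball" and u: "u \<in> Ball" "adj u v" "Suc (depth u) = depth v"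
  shows "u = parent v"
proof (rule ccontr)
  assume "u \<noteq> parent v"
  moreover have p: "parent v \<in> Ball" "adj (parent v) v" "Suc (depth (parent v)) = depth v"
    using parent_Ball[OF v] u by auto
  ultimately show False
    using same_depth_no_detour[of u "parent v" "[v]"] u v adj_sym by (auto simp: induced_def)
qed

lemma neighbour_cases:
  assumes v: "v \<in> Ball" and u: "u \<in> Ball" "adj v u"
  shows "(depth v > 0 \<and> u = parent v) \<or> depth u = Suc (depth v)"
proof -
  have "depth u \<le> Suc (depth v)" "depth v \<le> Suc (depth u)"
    using reachable_adj[of v u] reachable_adj[of u v] v u adj_sym Ball_iff by auto
  moreover have "depth u \<noteq> depth v" using no_same_depth_edge[OF u(1) v adj_sym[OF u(2)]] .
  ultimately have "depth u = Suc (depth v) \<or> Suc (depth u) = depth v" by linarith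
  then show ?thesis using parent_unique[OF v u(1) adj_sym[OF u(2)]] by auto
qed

abbreviation inc :: "'v \<Rightarrow> 'v set set" where "inc v \<equiv> inc_edges adj v"

definition ball_edges :: "'v set set" where "ball_edges = {e \<in> edges adj. e \<subseteq> Ball}"
definition outer_edges :: "'v set set" where "outer_edges = edges adj - ball_edges"
definition level :: "nat \<Rightarrow> 'v set" where "level L = {v \<in> Ball. depth v = L}"
definition children :: "'v \<Rightarrow> 'v set" where "children a = {c \<in> Ball. adj a c \<and> depth c = Suc (depth a)}"
definition parent_edge :: "'v \<Rightarrow> 'v set" where "parent_edge v = {parent v, v}"
definition child_edges :: "'v \<Rightarrow> 'v set set" where "child_edges a = parent_edge ` children a"

definition edges_upto :: "nat \<Rightarrow> 'v set set" where
  "edges_upto L = {e \<in> ball_edges. \<forall>v\<in>e. depth v \<le> L}"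
definition level_edges :: "nat \<Rightarrow> 'v set set" where
  "level_edges L = (\<Union>a\<in>level L. child_edges a)"

lemma inc_iff: "e \<in> inc v \<longleftrightarrow> (\<exists>u. adj v u \<and> e = {v, u})"
  unfolding inc_edges_def edges_def using adj_sym by (auto simp: insert_commute)

lemma finite_edges: "finite (edges adj)"
proof -
  have "edges adj \<subseteq> Pow V" unfolding edges_def using adj_V by auto
  then show ?thesis using finite_subset finite_V by auto
qed

lemma finite_inc: "finite (inc v)"
  unfolding inc_edges_def using finite_edges by auto

lemma finite_ball_edges: "finite ball_edges" and finite_outer_edges: "finite outer_edges"
  unfolding ball_edges_def outer_edges_def using finite_edges by auto

lemma finite_level: "finite (level L)" and finite_children: "finite (children a)"
  and finite_child_edges: "finite (child_edges a)" and finite_edges_upto: "finite (edges_upto L)"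
  unfolding level_def children_def child_edges_def edges_upto_def
  using finite_Ball finite_ball_edges by auto

lemma children_parent: "c \<in> children a \<Longrightarrow> a \<in> Ball \<Longrightarrow> c \<in> Ball \<and> depth c = Suc (depth a) \<and> parent c = a"
  unfolding children_def using parent_unique adj_sym by auto

lemma parent_children: "c \<in> Ball \<Longrightarrow> 0 < depth c \<Longrightarrow> c \<in> children (parent c)"
  unfolding children_def using parent_Ball by auto

lemma finite_level_edges: "finite (level_edges L)"
  unfolding level_edges_def using finite_level finite_child_edges by auto

lemma parent_edge_child: "c \<in> children a \<Longrightarrow> a \<in> Ball \<Longrightarrow> parent_edge c = {a, c}"
  using children_parent unfolding parent_edge_def by auto

lemma parent_edge_inj: "v \<in> Ball \<Longrightarrow> 0 < depth v \<Longrightarrow> w \<in> Ball \<Longrightarrow> 0 < depth w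
    \<Longrightarrow> parent_edge v = parent_edge w \<Longrightarrow> v = w"
  using parent_Ball[of v] parent_Ball[of w] unfolding parent_edge_def by (auto simp: doubleton_eq_iff)

lemma parent_edge_ball: "v \<in> Ball \<Longrightarrow> 0 < depth v \<Longrightarrow> parent_edge v \<in> ball_edges"
  unfolding parent_edge_def ball_edges_def edges_def using parent_Ball by auto

lemma parent_edge_inc: "v \<in> Ball \<Longrightarrow> 0 < depth v \<Longrightarrow> parent_edge v \<in> inc v \<inter> inc (parent v)"
  unfolding parent_edge_def using parent_Ball[of v] inc_iff adj_sym by (metis IntI insert_commute)

lemma ball_edge_parent_edge:
  assumes "e \<in> ball_edges"
  obtains v where "v \<in> Ball" "0 < depth v" "e = parent_edge v"
proof -
  obtain a u where au: "adj a u" "e = {a, u}" "a \<in> Ball" "u \<in> Ball"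
    using assms unfolding ball_edges_def edges_def by auto
  from neighbour_cases[OF au(3,4,1)] show ?thesis
  proof
    assume "0 < depth a \<and> u = parent a"
    then show ?thesis using that[of a] au by (auto simp: parent_edge_def insert_commute)
  next
    assume "depth u = Suc (depth a)"
    then have "parent u = a" using parent_unique[OF au(4,3)] au(1) by simp
    then show ?thesis using that[of u] au \<open>depth u = Suc (depth a)\<close> by (auto simp: parent_edge_def)
  qed
qed

lemma edges_upto_eq: "edges_upto L = parent_edge ` {v \<in> Ball. 0 < depth v \<and> depth v \<le> L}"
proof (intro equalityI subsetI)
  fix e assume e: "e \<in> edges_upto L"
  then obtain v where v: "v \<in> Ball" "0 < depth v" "e = parent_edge v"
    unfolding edges_upto_def by (auto elim: ball_edge_parent_edge)
  then have "depth v \<le> L" using e unfolding edges_upto_def parent_edge_def by auto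
  then show "e \<in> parent_edge ` {v \<in> Ball. 0 < depth v \<and> depth v \<le> L}" using v by auto
next
  fix e assume "e \<in> parent_edge ` {v \<in> Ball. 0 < depth v \<and> depth v \<le> L}"
  then obtain v where "v \<in> Ball" "0 < depth v" "depth v \<le> L" "e = parent_edge v" by auto
  then show "e \<in> edges_upto L"
    using parent_edge_ball parent_Ball[of v] unfolding edges_upto_def parent_edge_def by auto
qed

lemma level_Suc: "level (Suc L) = (\<Union>a\<in>level L. children a)"
proof (intro equalityI subsetI)
  fix c assume "c \<in> level (Suc L)"
  then have c: "c \<in> Ball" "depth c = Suc L" by (simp_all add: level_def)
  then have "parent c \<in> level L" "c \<in> children (parent c)"
    using parent_Ball[of c] parent_children[of c] by (auto simp: level_def)
  then show "c \<in> (\<Union>a\<in>level L. children a)" by blast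
next
  fix c assume "c \<in> (\<Union>a\<in>level L. children a)"
  then obtain a where "a \<in> level L" "c \<in> children a" by blast
  then show "c \<in> level (Suc L)" using children_parent[of c a] by (simp add: level_def)
qed

lemma edges_upto_Suc: "edges_upto (Suc L) = edges_upto L \<union> level_edges L"
proof -
  have "{v \<in> Ball. 0 < depth v \<and> depth v \<le> Suc L}
      = {v \<in> Ball. 0 < depth v \<and> depth v \<le> L} \<union> level (Suc L)"
    unfolding level_def by auto
  then show ?thesis
    unfolding edges_upto_eq level_edges_def child_edges_def level_Suc by (simp only: image_Un image_UN)
qed

lemma edges_upto_level_disjoint: "edges_upto L \<inter> level_edges L = {}"
proof -
  have "depth c = Suc L" if "c \<in> children a" "a \<in> level L" for a c
    using children_parent that by (auto simp: level_def)
  then show ?thesis unfolding edges_upto_def level_edges_def child_edges_def parent_edge_def by fastforce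
qed

lemma edges_upto_0: "edges_upto 0 = {}"
proof -
  have "{v \<in> Ball. 0 < depth v \<and> depth v \<le> 0} = {}" by auto
  then show ?thesis unfolding edges_upto_eq by blast
qed

lemma edges_upto_top: "edges_upto (Suc n) = ball_edges"
  unfolding edges_upto_def ball_edges_def using Ball_iff by auto

lemma level_0: "level 0 = {r}"
  unfolding level_def using root_Ball depth_root depth_0 Ball_iff by auto

lemma level_top: "level (Suc n) = {}"
  unfolding level_def using Ball_iff by auto

lemma children_root: "children r = level 1"
proof (intro equalityI subsetI)
  fix c assume "c \<in> children r"
  then show "c \<in> level 1" unfolding children_def level_def using depth_root by simp
next
  fix c assume "c \<in> level 1"
  then have c: "c \<in> Ball" "depth c = 1" by (simp_all add: level_def)
  then have "parent c = r" using parent_Ball[of c] depth_0 Ball_iff by simp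
  then show "c \<in> children r" unfolding children_def using c parent_Ball[of c] depth_root by simp
qed

lemma child_edges_disjoint:
  assumes "a \<in> Ball" "b \<in> Ball" "a \<noteq> b"
  shows "child_edges a \<inter> child_edges b = {}"
proof (rule ccontr)
  assume "child_edges a \<inter> child_edges b \<noteq> {}"
  then obtain c d where "c \<in> children a" "d \<in> children b" "parent_edge c = parent_edge d"
    unfolding child_edges_def by auto
  then show False using parent_edge_inj[of c d] children_parent[of c a] children_parent[of d b] assms
    by auto
qed

lemma other_child_edge:
  assumes "e \<in> child_edges a" "a \<in> Ball"
  shows "other a e \<in> children a \<and> e = {a, other a e}"
proof -
  obtain c where c: "c \<in> children a" "e = {a, c}"
    using assms parent_edge_child unfolding child_edges_def by auto
  then have "c \<noteq> a" using children_parent[OF c(1) assms(2)] by auto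
  then show ?thesis using c other_eq[OF \<open>c \<noteq> a\<close>] by simp
qed

lemma inc_ball_edges:
  assumes v: "v \<in> Ball"
  shows "inc v \<inter> ball_edges = (if 0 < depth v then {parent_edge v} else {}) \<union> child_edges v"
proof (intro equalityI subsetI)
  fix e assume e: "e \<in> inc v \<inter> ball_edges"
  then obtain u where u: "adj v u" "e = {v, u}" "u \<in> Ball"
    using inc_iff unfolding ball_edges_def by auto
  from neighbour_cases[OF v u(3,1)] show "e \<in> (if 0 < depth v then {parent_edge v} else {}) \<union> child_edges v"
  proof
    assume "0 < depth v \<and> u = parent v"
    then show ?thesis using u by (simp add: parent_edge_def insert_commute)
  next
    assume "depth u = Suc (depth v)"
    then have "u \<in> children v" using u unfolding children_def by simp
    then show ?thesis using u parent_edge_child[OF _ v] unfolding child_edges_def by auto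
  qed
next
  fix e assume "e \<in> (if 0 < depth v then {parent_edge v} else {}) \<union> child_edges v"
  then consider "0 < depth v" "e = parent_edge v" | c where "c \<in> children v" "e = parent_edge c"
    unfolding child_edges_def by (auto split: if_splits)
  then show "e \<in> inc v \<inter> ball_edges"
  proof cases
    case (2 c)
    then have "c \<in> Ball" "0 < depth c" "parent c = v" using children_parent[OF _ v] by auto
    then show ?thesis using parent_edge_inc[of c] parent_edge_ball[of c] 2 by auto
  qed (use parent_edge_inc[OF v] parent_edge_ball[OF v] in auto)
qed

lemma inc_inner:
  assumes v: "v \<in> Ball" and d: "depth v < n"
  shows "inc v = (if 0 < depth v then {parent_edge v} else {}) \<union> child_edges v"
proof -
  have "inc v \<subseteq> ball_edges"
  proof
    fix e assume "e \<in> inc v"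
    then obtain u where u: "adj v u" "e = {v, u}" using inc_iff by auto
    then have "u \<in> Ball" using reachable_adj v d Ball_iff by fastforce
    then show "e \<in> ball_edges" using u v unfolding ball_edges_def edges_def by auto
  qed
  then show ?thesis using inc_ball_edges[OF v] by blast
qed

lemma level_edge_ends:
  assumes "e \<in> level_edges L"
  obtains a c where "a \<in> level L" "c \<in> children a" "e = {a, c}" "depth a = L" "depth c = Suc L"
proof -
  obtain a c where "a \<in> level L" "c \<in> children a" "e = parent_edge c"
    using assms unfolding level_edges_def child_edges_def by auto
  then show ?thesis using that parent_edge_child[of c a] children_parent[of c a] by (auto simp: level_def)
qed

lemma level_edges_inc:
  assumes R: "R \<subseteq> level_edges L"
  shows "depth v < L \<Longrightarrow> R \<inter> inc v = {}"
    and "v \<in> level L \<Longrightarrow> R \<inter> inc v = R \<inter> child_edges v"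
proof -
  have ends: "depth v \<ge> L \<and> (depth v = L \<longrightarrow> e \<in> child_edges v)" if eR: "e \<in> R" and ve: "v \<in> e" for e
  proof -
    obtain a c where ac: "a \<in> level L" "c \<in> children a" "e = {a, c}" "depth a = L" "depth c = Suc L"
      using R eR level_edge_ends[of e L] by blast
    then have "e \<in> child_edges a" using parent_edge_child[of c a] unfolding child_edges_def level_def by force
    then show ?thesis using ac ve by auto
  qed
  show "depth v < L \<Longrightarrow> R \<inter> inc v = {}"
    using ends unfolding inc_edges_def by fastforce
  assume v: "v \<in> level L"
  then have "child_edges v \<subseteq> inc v" using inc_ball_edges[of v] unfolding level_def by blast
  then show "R \<inter> inc v = R \<inter> child_edges v"
    using ends v unfolding inc_edges_def level_def by blast
qed

lemma inc_outside_Ball: "v \<notin> Ball \<Longrightarrow> inc v \<inter> ball_edges = {}"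
  unfolding ball_edges_def inc_edges_def by auto

end

section \<open>The partition function of a network whose ball is a tree\<close>

locale ball_tree_network = ball_tree V adj r n
  for V :: "'v set" and adj and r and n +
  fixes mu :: "'v \<Rightarrow> 'v set set \<Rightarrow> real" and t :: real
  assumes network: "cavity_monotone_network V adj mu" and t_pos: "0 < t"
begin

lemma local_cavity_monotone: "v \<in> V \<Longrightarrow> cavity_monotone (inc v) (mu v)"
  using network unfolding cavity_monotone_network_def by auto

text \<open>Conditioning on the configuration P of the outer edges turns the local measure at v into
  a measure on the remaining edges at v.\<close>
definition bc_measure :: "'v set set \<Rightarrow> 'v \<Rightarrow> 'v set set \<Rightarrow> real" where
  "bc_measure P v S = mu v (S \<union> (P \<inter> inc v))"

text \<open>Partial partition functions of the subtree below a vertex a of depth at least 1, with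
  the parent edge of a present (first component) or absent (second); the parent edge itself
  is not weighted.  They are computed from the children by a homogenised local sum; the
  recursion depth Suc n - depth a reaches the bottom level of the ball.\<close>
fun subtree_sums :: "'v set set \<Rightarrow> nat \<Rightarrow> 'v \<Rightarrow> real \<times> real" where
  "subtree_sums P 0 a = (0, 0)"
| "subtree_sums P (Suc j) a =
     (let p = (\<lambda>e. t * fst (subtree_sums P j (other a e))); q = (\<lambda>e. snd (subtree_sums P j (other a e)))
      in (subset_hpoly (child_edges a) (\<lambda>S. bc_measure P a (insert (parent_edge a) S)) p q,
          subset_hpoly (child_edges a) (bc_measure P a) p q))"

definition Zwith :: "'v set set \<Rightarrow> 'v \<Rightarrow> real" where
  "Zwith P a = fst (subtree_sums P (Suc n - depth a) a)"
definition Zwithout :: "'v set set \<Rightarrow> 'v \<Rightarrow> real" where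
  "Zwithout P a = snd (subtree_sums P (Suc n - depth a) a)"

lemma subtree_sums_rec:
  assumes a: "a \<in> Ball"
  shows "Zwith P a = subset_hpoly (child_edges a) (\<lambda>S. bc_measure P a (insert (parent_edge a) S))
                       (\<lambda>e. t * Zwith P (other a e)) (\<lambda>e. Zwithout P (other a e))"
    and "Zwithout P a = subset_hpoly (child_edges a) (bc_measure P a)
                       (\<lambda>e. t * Zwith P (other a e)) (\<lambda>e. Zwithout P (other a e))"
proof -
  have s: "Suc n - depth a = Suc (n - depth a)" using a Ball_iff by auto
  have c: "Suc n - depth (other a e) = n - depth a" if "e \<in> child_edges a" for e
    using other_child_edge[OF that a] children_parent[OF _ a] by auto
  show "Zwith P a = subset_hpoly (child_edges a) (\<lambda>S. bc_measure P a (insert (parent_edge a) S))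
                       (\<lambda>e. t * Zwith P (other a e)) (\<lambda>e. Zwithout P (other a e))"
    unfolding Zwith_def s subtree_sums.simps Let_def fst_conv
    by (rule subset_hpoly_cong) (auto simp: Zwith_def Zwithout_def c)
  show "Zwithout P a = subset_hpoly (child_edges a) (bc_measure P a)
                       (\<lambda>e. t * Zwith P (other a e)) (\<lambda>e. Zwithout P (other a e))"
    unfolding Zwithout_def s subtree_sums.simps Let_def snd_conv
    by (rule subset_hpoly_cong) (auto simp: Zwith_def Zwithout_def c)
qed

definition subtree_factor :: "'v set set \<Rightarrow> 'v \<Rightarrow> 'v set set \<Rightarrow> real" where
  "subtree_factor P c F = (if parent_edge c \<in> F then Zwith P c else Zwithout P c)"

text \<open>The ball sum with the subtrees below level L summed out: the edges up to level L are
  summed explicitly, and every vertex c of level L contributes its subtree factor.\<close>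
definition level_term :: "'v set set \<Rightarrow> nat \<Rightarrow> ('v set set \<Rightarrow> real) \<Rightarrow> 'v set set \<Rightarrow> real" where
  "level_term P L g F = (\<Prod>v\<in>{v \<in> Ball. depth v < L}. bc_measure P v (F \<inter> inc v)) * (\<Prod>e\<in>F. t)
     * (\<Prod>c\<in>level L. subtree_factor P c F) * g (F \<inter> inc r)"

definition level_sum :: "'v set set \<Rightarrow> nat \<Rightarrow> ('v set set \<Rightarrow> real) \<Rightarrow> real" where
  "level_sum P L g = (\<Sum>F\<in>Pow (edges_upto L). level_term P L g F)"

definition ball_sum :: "'v set set \<Rightarrow> ('v set set \<Rightarrow> real) \<Rightarrow> real" where
  "ball_sum P g = (\<Sum>F\<in>Pow ball_edges. (\<Prod>v\<in>Ball. bc_measure P v (F \<inter> inc v)) * (\<Prod>e\<in>F. t) * g (F \<inter> inc r))"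

lemma level_sum_top: "level_sum P (Suc n) g = ball_sum P g"
proof -
  have "{v \<in> Ball. depth v < Suc n} = Ball" using Ball_iff by auto
  then show ?thesis unfolding level_sum_def level_term_def ball_sum_def edges_upto_top level_top by simp
qed

definition branch_weight :: "'v set set \<Rightarrow> 'v \<Rightarrow> 'v set set \<Rightarrow> 'v set set \<Rightarrow> real" where
  "branch_weight P a F S = bc_measure P a ((F \<inter> inc a) \<union> S)
     * (\<Prod>e\<in>S. t * Zwith P (other a e)) * (\<Prod>e\<in>child_edges a - S. Zwithout P (other a e))"

text \<open>Summing out the child edges of a vertex of level L \<ge> 1 yields its subtree factor: this is
  the defining recursion of the subtree sums.\<close>
lemma branch_weight_sum:
  assumes a: "a \<in> level L" and L: "1 \<le> L" and F: "F \<subseteq> edges_upto L"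
  shows "(\<Sum>S\<in>Pow (child_edges a). branch_weight P a F S) = subtree_factor P a F"
proof -
  have aB: "a \<in> Ball" "depth a = L" "0 < depth a" using a L unfolding level_def by auto
  have "F \<inter> inc a \<subseteq> {parent_edge a}"
  proof
    fix e assume e: "e \<in> F \<inter> inc a"
    then have "e \<in> inc a \<inter> ball_edges" "\<forall>v\<in>e. depth v \<le> L" using F unfolding edges_upto_def by auto
    moreover have "e \<notin> child_edges a" if "\<forall>v\<in>e. depth v \<le> L"
    proof
      assume "e \<in> child_edges a"
      then have "other a e \<in> e" "depth (other a e) = Suc L"
        using other_child_edge[OF _ aB(1)] children_parent[OF _ aB(1)] aB(2) by (metis insertCI)+
      then show False using that by auto
    qed
    ultimately show "e \<in> {parent_edge a}" using inc_ball_edges[OF aB(1)] aB(3) by auto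
  qed
  moreover have "parent_edge a \<in> inc a" using parent_edge_inc aB by blast
  ultimately have Fa: "F \<inter> inc a = (if parent_edge a \<in> F then {parent_edge a} else {})" by auto
  show ?thesis
    unfolding subtree_factor_def branch_weight_def Fa subtree_sums_rec[OF aB(1)] subset_hpoly_def
    by (simp add: mult_ac)
qed

lemma subtree_factor_children:
  assumes a: "a \<in> Ball"
  shows "(\<Prod>c\<in>children a. subtree_factor P c F)
       = (\<Prod>e\<in>child_edges a. if e \<in> F then Zwith P (other a e) else Zwithout P (other a e))"
proof -
  have inj: "inj_on parent_edge (children a)"
    using parent_edge_inj children_parent[OF _ a] by (intro inj_onI) auto
  have other: "other a (parent_edge c) = c" if "c \<in> children a" for c
  proof -
    have "c \<noteq> a" using children_parent[OF that a] by auto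
    then show ?thesis using parent_edge_child[OF that a] other_eq by simp
  qed
  have "(\<Prod>e\<in>child_edges a. if e \<in> F then Zwith P (other a e) else Zwithout P (other a e))
      = (\<Prod>c\<in>children a. if parent_edge c \<in> F then Zwith P (other a (parent_edge c))
                                                 else Zwithout P (other a (parent_edge c)))"
    unfolding child_edges_def by (rule prod.reindex[OF inj, unfolded comp_def])
  also have "\<dots> = (\<Prod>c\<in>children a. subtree_factor P c F)"
    by (rule prod.cong) (simp_all add: subtree_factor_def other)
  finally show ?thesis ..
qed

lemma prod_level_edges:
  assumes R: "R \<subseteq> level_edges L"
  shows "(\<Prod>e\<in>R. f e) = (\<Prod>a\<in>level L. \<Prod>e\<in>R \<inter> child_edges a. f e)"
proof -
  have split: "R = (\<Union>a\<in>level L. R \<inter> child_edges a)" using R unfolding level_edges_def by auto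
  have disjoint: "(R \<inter> child_edges a) \<inter> (R \<inter> child_edges b) = {}"
    if "a \<in> level L" "b \<in> level L" "a \<noteq> b" for a b
    using child_edges_disjoint[of a b] that unfolding level_def by auto
  have "(\<Prod>e\<in>R. f e) = (\<Prod>e\<in>(\<Union>a\<in>level L. R \<inter> child_edges a). f e)"
    using split by (rule arg_cong)
  also have "\<dots> = (\<Prod>a\<in>level L. \<Prod>e\<in>R \<inter> child_edges a. f e)"
    by (rule prod.UNION_disjoint) (use finite_level finite_child_edges disjoint in auto)
  finally show ?thesis .
qed

lemma subtree_factors_next_level:
  assumes F: "F \<subseteq> edges_upto L" and R: "R \<subseteq> level_edges L"
  shows "(\<Prod>c\<in>level (Suc L). subtree_factor P c (F \<union> R))
       = (\<Prod>a\<in>level L. (\<Prod>e\<in>R \<inter> child_edges a. Zwith P (other a e))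
                        * (\<Prod>e\<in>child_edges a - R. Zwithout P (other a e)))"
proof -
  have "(\<Prod>c\<in>level (Suc L). subtree_factor P c (F \<union> R))
      = (\<Prod>a\<in>level L. \<Prod>c\<in>children a. subtree_factor P c (F \<union> R))"
    unfolding level_Suc
    by (rule prod.UNION_disjoint)
       (use finite_level finite_children in \<open>auto simp: level_def dest: children_parent\<close>)
  also have "\<dots> = (\<Prod>a\<in>level L. \<Prod>e\<in>child_edges a. if e \<in> R then Zwith P (other a e) else Zwithout P (other a e))"
  proof (rule prod.cong[OF refl])
    fix a assume a: "a \<in> level L"
    then have "a \<in> Ball" "child_edges a \<inter> F = {}"
      using F edges_upto_level_disjoint unfolding level_def level_edges_def by auto
    then show "(\<Prod>c\<in>children a. subtree_factor P c (F \<union> R))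
        = (\<Prod>e\<in>child_edges a. if e \<in> R then Zwith P (other a e) else Zwithout P (other a e))"
      unfolding subtree_factor_children[OF \<open>a \<in> Ball\<close>] by (intro prod.cong) auto
  qed
  finally show ?thesis using finite_child_edges by (simp add: prod_if_split Int_commute)
qed

lemma level_term_factor:
  assumes L: "1 \<le> L" and F: "F \<subseteq> edges_upto L" and R: "R \<subseteq> level_edges L"
  shows "level_term P (Suc L) g (F \<union> R)
       = (\<Prod>v\<in>{v \<in> Ball. depth v < L}. bc_measure P v (F \<inter> inc v)) * (\<Prod>e\<in>F. t) * g (F \<inter> inc r)
         * (\<Prod>a\<in>level L. branch_weight P a F (R \<inter> child_edges a))"
proof -
  let ?low = "{v \<in> Ball. depth v < L}"
  have vertices: "(\<Prod>v\<in>{v \<in> Ball. depth v < Suc L}. bc_measure P v ((F \<union> R) \<inter> inc v))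
      = (\<Prod>v\<in>?low. bc_measure P v (F \<inter> inc v))
        * (\<Prod>a\<in>level L. bc_measure P a ((F \<inter> inc a) \<union> (R \<inter> child_edges a)))"
  proof -
    have "{v \<in> Ball. depth v < Suc L} = ?low \<union> level L" "?low \<inter> level L = {}" "finite ?low"
      using finite_Ball unfolding level_def by auto
    then have "(\<Prod>v\<in>{v \<in> Ball. depth v < Suc L}. bc_measure P v ((F \<union> R) \<inter> inc v))
      = (\<Prod>v\<in>?low. bc_measure P v ((F \<union> R) \<inter> inc v)) * (\<Prod>a\<in>level L. bc_measure P a ((F \<union> R) \<inter> inc a))"
      using finite_level by (simp add: prod.union_disjoint)
    moreover have "(F \<union> R) \<inter> inc v = F \<inter> inc v" if "v \<in> ?low" for v
      using level_edges_inc(1)[OF R, of v] that by auto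
    moreover have "(F \<union> R) \<inter> inc a = (F \<inter> inc a) \<union> (R \<inter> child_edges a)" if "a \<in> level L" for a
      using level_edges_inc(2)[OF R that] by auto
    ultimately show ?thesis by simp
  qed
  have "F \<inter> R = {}" "finite F" "finite R"
    using F R edges_upto_level_disjoint finite_subset[OF _ finite_edges_upto]
      finite_subset[OF _ finite_level_edges] by auto
  then have t_powers: "(\<Prod>e\<in>F \<union> R. t) = (\<Prod>e\<in>F. t) * (\<Prod>a\<in>level L. \<Prod>e\<in>R \<inter> child_edges a. t)"
    using prod_level_edges[OF R, of "\<lambda>_. t"] by (simp add: prod.union_disjoint card_Un_disjoint power_add)
  have "branch_weight P a F (R \<inter> child_edges a)
      = bc_measure P a ((F \<inter> inc a) \<union> (R \<inter> child_edges a)) * (\<Prod>e\<in>R \<inter> child_edges a. t)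
        * ((\<Prod>e\<in>R \<inter> child_edges a. Zwith P (other a e)) * (\<Prod>e\<in>child_edges a - R. Zwithout P (other a e)))" for a
  proof -
    have "child_edges a - R \<inter> child_edges a = child_edges a - R" by auto
    then show ?thesis unfolding branch_weight_def by (simp add: prod.distrib mult_ac)
  qed
  moreover have "(F \<union> R) \<inter> inc r = F \<inter> inc r"
    using level_edges_inc(1)[OF R, of r] L depth_root by auto
  ultimately show ?thesis
    unfolding level_term_def vertices t_powers subtree_factors_next_level[OF F R]
    by (simp add: prod.distrib mult_ac)
qed

text \<open>Summing out the edges between levels L and L + 1 replaces the subtree factors of level
  L + 1 by those of level L.\<close>
lemma level_sum_step:
  assumes L: "1 \<le> L"
  shows "level_sum P (Suc L) g = level_sum P L g"
proof -
  let ?low = "\<lambda>F. (\<Prod>v\<in>{v \<in> Ball. depth v < L}. bc_measure P v (F \<inter> inc v)) * (\<Prod>e\<in>F. t) * g (F \<inter> inc r)"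
  have "level_sum P (Suc L) g
      = (\<Sum>F\<in>Pow (edges_upto L). \<Sum>R\<in>Pow (level_edges L). level_term P (Suc L) g (F \<union> R))"
    unfolding level_sum_def edges_upto_Suc
    by (rule sum_Pow_Un[OF finite_edges_upto finite_level_edges edges_upto_level_disjoint])
  also have "\<dots> = (\<Sum>F\<in>Pow (edges_upto L). ?low F * (\<Prod>a\<in>level L. subtree_factor P a F))"
  proof (rule sum.cong[OF refl])
    fix F assume F: "F \<in> Pow (edges_upto L)"
    have "(\<Sum>R\<in>Pow (level_edges L). level_term P (Suc L) g (F \<union> R))
        = (\<Sum>R\<in>Pow (level_edges L). ?low F * (\<Prod>a\<in>level L. branch_weight P a F (R \<inter> child_edges a)))"
      using level_term_factor[OF L] F by (intro sum.cong) auto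
    also have "\<dots> = ?low F * (\<Sum>R\<in>Pow (level_edges L). \<Prod>a\<in>level L. branch_weight P a F (R \<inter> child_edges a))"
      by (rule sum_distrib_left[symmetric])
    also have "(\<Sum>R\<in>Pow (level_edges L). \<Prod>a\<in>level L. branch_weight P a F (R \<inter> child_edges a))
        = (\<Prod>a\<in>level L. \<Sum>S\<in>Pow (child_edges a). branch_weight P a F S)"
      unfolding level_edges_def
      by (rule sum_Pow_UN_prod)
         (use finite_level finite_child_edges child_edges_disjoint in \<open>auto simp: level_def\<close>)
    also have "\<dots> = (\<Prod>a\<in>level L. subtree_factor P a F)"
      using branch_weight_sum[OF _ L] F by (intro prod.cong) auto
    finally show "(\<Sum>R\<in>Pow (level_edges L). level_term P (Suc L) g (F \<union> R))
        = ?low F * (\<Prod>a\<in>level L. subtree_factor P a F)" .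
  qed
  also have "\<dots> = level_sum P L g"
    unfolding level_sum_def level_term_def by (intro sum.cong) (simp_all add: mult_ac)
  finally show ?thesis .
qed

lemma ball_sum_level_1: "ball_sum P g = level_sum P 1 g"
proof -
  have "level_sum P L g = ball_sum P g" if "1 \<le> L" "L \<le> Suc n" for L
    using that(2,1)
  proof (induction L rule: inc_induct)
    case base
    show ?case by (rule level_sum_top)
  next
    case (step L)
    then show ?case using level_sum_step[of L] by simp
  qed
  then show ?thesis by simp
qed

text \<open>At the root all edges are ball edges (for n \<ge> 1), so the root level sum is a homogenised
  local sum at the root.\<close>
lemma level_sum_root:
  assumes n: "1 \<le> n" and P: "P \<inter> inc r = {}"
  shows "level_sum P 1 g
       = subset_hpoly (inc r) (\<lambda>S. mu r S * g S) (\<lambda>e. t * Zwith P (other r e)) (\<lambda>e. Zwithout P (other r e))"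
proof -
  have inc_r: "inc r = child_edges r" using inc_inner[OF root_Ball] n depth_root by simp
  have edges1: "edges_upto 1 = inc r"
    using edges_upto_Suc[of 0] unfolding edges_upto_0 level_edges_def level_0 inc_r by simp
  have low1: "{v \<in> Ball. depth v < 1} = {r}" using root_Ball depth_root depth_0 Ball_iff by auto
  show ?thesis unfolding level_sum_def subset_hpoly_def edges1
  proof (rule sum.cong[OF refl])
    fix F assume "F \<in> Pow (inc r)"
    then have F: "F \<inter> inc r = F" "F \<subseteq> inc r" by auto
    have "(\<Prod>c\<in>level 1. subtree_factor P c F)
        = (\<Prod>e\<in>inc r. if e \<in> F then Zwith P (other r e) else Zwithout P (other r e))"
      unfolding children_root[symmetric] subtree_factor_children[OF root_Ball] inc_r ..
    also have "\<dots> = (\<Prod>e\<in>F. Zwith P (other r e)) * (\<Prod>e\<in>inc r - F. Zwithout P (other r e))"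
      using F by (simp add: prod_if_split[OF finite_inc] Int_absorb2)
    finally show "level_term P 1 g F = mu r F * g F * (\<Prod>e\<in>F. t * Zwith P (other r e))
        * (\<Prod>e\<in>inc r - F. Zwithout P (other r e))"
      unfolding level_term_def low1 bc_measure_def using F P by (simp add: prod.distrib mult_ac)
  qed
qed

definition outer_weight :: "'v set set \<Rightarrow> real" where
  "outer_weight P = (\<Prod>v\<in>V - Ball. mu v (P \<inter> inc v)) * (\<Prod>e\<in>P. t)"

lemma global_measure_split:
  assumes P: "P \<subseteq> outer_edges" and F: "F \<subseteq> ball_edges"
  shows "global_measure V adj mu (P \<union> F)
       = (\<Prod>v\<in>V - Ball. mu v (P \<inter> inc v)) * (\<Prod>v\<in>Ball. bc_measure P v (F \<inter> inc v))"
proof -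
  have "global_measure V adj mu (P \<union> F)
      = (\<Prod>v\<in>V - Ball. mu v ((P \<union> F) \<inter> inc v)) * (\<Prod>v\<in>Ball. mu v ((P \<union> F) \<inter> inc v))"
    unfolding global_measure_def using prod.subset_diff[OF Ball_V finite_V] by simp
  moreover have "(P \<union> F) \<inter> inc v = P \<inter> inc v" if "v \<in> V - Ball" for v
    using inc_outside_Ball[of v] F that by auto
  moreover have "mu v ((P \<union> F) \<inter> inc v) = bc_measure P v (F \<inter> inc v)" for v
    unfolding bc_measure_def by (simp add: Int_Un_distrib2 Un_commute)
  ultimately show ?thesis by simp
qed

lemma partition_sum_split:
  assumes n: "1 \<le> n"
  shows "(\<Sum>F\<in>Pow (edges adj). global_measure V adj mu F * t ^ card F * g (F \<inter> inc r))
       = (\<Sum>P\<in>Pow outer_edges. outer_weight P * ball_sum P g)"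
proof -
  have split: "edges adj = outer_edges \<union> ball_edges" "outer_edges \<inter> ball_edges = {}"
    unfolding outer_edges_def ball_edges_def by auto
  have inc_r: "inc r \<subseteq> ball_edges"
    using inc_ball_edges[OF root_Ball] inc_inner[OF root_Ball] n depth_root by auto
  have "(\<Sum>F\<in>Pow (edges adj). global_measure V adj mu F * t ^ card F * g (F \<inter> inc r))
      = (\<Sum>P\<in>Pow outer_edges. \<Sum>F\<in>Pow ball_edges.
           global_measure V adj mu (P \<union> F) * t ^ card (P \<union> F) * g ((P \<union> F) \<inter> inc r))"
    unfolding split(1) by (rule sum_Pow_Un[OF finite_outer_edges finite_ball_edges split(2)])
  also have "\<dots> = (\<Sum>P\<in>Pow outer_edges. outer_weight P * ball_sum P g)"
    unfolding ball_sum_def sum_distrib_left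
  proof (intro sum.cong refl)
    fix P F assume P: "P \<in> Pow outer_edges" and F: "F \<in> Pow ball_edges"
    then have "P \<inter> F = {}" "finite P" "finite F" "(P \<union> F) \<inter> inc r = F \<inter> inc r"
      using split inc_r finite_subset finite_outer_edges finite_ball_edges by auto
    then show "global_measure V adj mu (P \<union> F) * t ^ card (P \<union> F) * g ((P \<union> F) \<inter> inc r)
        = outer_weight P * ((\<Prod>v\<in>Ball. bc_measure P v (F \<inter> inc v)) * (\<Prod>e\<in>F. t) * g (F \<inter> inc r))"
      using global_measure_split P F
      by (simp add: outer_weight_def card_Un_disjoint power_add mult_ac)
  qed
  finally show ?thesis .
qed

section \<open>Alternating bounds on the subtree sums\<close>

lemma xiter_nonneg: "0 \<le> xiter adj mu t m i j"
proof (induction m arbitrary: i j)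
  case (Suc m)
  have "0 \<le> cavity_op adj mu (xiter adj mu t m) i j"
  proof (cases "adj i j")
    case True
    then have "i \<in> V" "{i, j} \<in> inc i" using adj_V inc_iff by auto
    then show ?thesis unfolding cavity_op_def local_weights_def using True Suc.IH
      by (simp add: cavity_ratio_nonneg[OF local_cavity_monotone])
  qed (simp add: cavity_op_def)
  then show ?case using t_pos by simp
qed simp

lemma local_weights_nonneg: "0 \<le> local_weights (xiter adj mu t m) v e"
  unfolding local_weights_def by (rule xiter_nonneg)

lemma subtree_sums_nonneg:
  assumes a: "a \<in> Ball" "0 < depth a"
  shows "0 \<le> Zwith P a \<and> 0 \<le> Zwithout P a"
proof -
  have "0 \<le> fst (subtree_sums P j a) \<and> 0 \<le> snd (subtree_sums P j a)" for j
    using a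
  proof (induction j arbitrary: a)
    case (Suc j)
    have aV: "a \<in> V" and pe: "parent_edge a \<in> inc a" using Suc.prems Ball_V parent_edge_inc by auto
    have child: "other a e \<in> Ball \<and> 0 < depth (other a e)" if "e \<in> child_edges a" for e
      using other_child_edge[OF that Suc.prems(1)] children_parent[OF _ Suc.prems(1)] by auto
    have measure: "0 \<le> bc_measure P a S" if "S \<subseteq> inc a" for S
      unfolding bc_measure_def using that
      by (intro cavity_monotoneD(2)[OF local_cavity_monotone[OF aV]]) auto
    have CE: "child_edges a \<subseteq> inc a" using inc_ball_edges[OF Suc.prems(1)] by blast
    show ?case unfolding subtree_sums.simps Let_def fst_conv snd_conv
      using Suc.IH child t_pos measure CE pe
      by (intro conjI subset_hpoly_nonneg mult_nonneg_nonneg) (auto simp: subset_iff)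
  qed simp
  then show ?thesis unfolding Zwith_def Zwithout_def by simp
qed

lemma inner_vertex:
  assumes P: "P \<subseteq> outer_edges" and a: "a \<in> Ball" "0 < depth a" "depth a < n"
  shows "parent_edge a \<in> inc a" and "inc a - {parent_edge a} = child_edges a"
    and "Zwith P a = subset_hpoly (child_edges a) (\<lambda>S. mu a (insert (parent_edge a) S))
                       (\<lambda>e. t * Zwith P (other a e)) (\<lambda>e. Zwithout P (other a e))"
    and "Zwithout P a = subset_hpoly (child_edges a) (mu a)
                          (\<lambda>e. t * Zwith P (other a e)) (\<lambda>e. Zwithout P (other a e))"
    and "xiter adj mu t (Suc m) a (parent a)
           = t * cavity_ratio (inc a) (mu a) (parent_edge a) (local_weights (xiter adj mu t m) a)"
proof -
  have inc_a: "inc a = insert (parent_edge a) (child_edges a)" using inc_inner[OF a(1,3)] a(2) by simp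
  show "parent_edge a \<in> inc a" using inc_a by simp
  have "parent_edge a \<notin> child_edges a"
  proof
    assume "parent_edge a \<in> child_edges a"
    then obtain c where c: "c \<in> children a" "parent_edge a = parent_edge c" unfolding child_edges_def by auto
    then have cB: "c \<in> Ball" "depth c = Suc (depth a)" using children_parent[OF _ a(1)] by auto
    have "a = c" by (rule parent_edge_inj[OF a(1,2) cB(1)]) (use cB c(2) in simp_all)
    then show False using cB(2) by simp
  qed
  then show "inc a - {parent_edge a} = child_edges a" using inc_a by auto
  have "inc a \<subseteq> ball_edges" using inc_ball_edges[OF a(1)] inc_a a(2) by auto
  then have "P \<inter> inc a = {}" using P unfolding outer_edges_def by auto
  then have "bc_measure P a = mu a" unfolding bc_measure_def by auto
  then show "Zwith P a = subset_hpoly (child_edges a) (\<lambda>S. mu a (insert (parent_edge a) S))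
                       (\<lambda>e. t * Zwith P (other a e)) (\<lambda>e. Zwithout P (other a e))"
    and "Zwithout P a = subset_hpoly (child_edges a) (mu a)
                          (\<lambda>e. t * Zwith P (other a e)) (\<lambda>e. Zwithout P (other a e))"
    using subtree_sums_rec[OF a(1), of P] by simp_all
  have "adj a (parent a)" "{a, parent a} = parent_edge a"
    using parent_Ball[OF a(1,2)] adj_sym unfolding parent_edge_def by auto
  then show "xiter adj mu t (Suc m) a (parent a)
           = t * cavity_ratio (inc a) (mu a) (parent_edge a) (local_weights (xiter adj mu t m) a)"
    by (simp add: cavity_op_def)
qed

lemma child_message:
  assumes "e \<in> child_edges a" "a \<in> Ball"
  shows "local_weights x a e = x (other a e) (parent (other a e))"
  using other_child_edge[OF assms] children_parent[OF _ assms(2)] unfolding local_weights_def by auto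

text \<open>One step of the cavity iteration reverses the direction of the comparison between the
  message x_{a \<rightarrow> parent a} and the ratio t Zwith / Zwithout of the subtree sums: an upper bound
  at all children gives a lower bound at a (the cavity ratio is antitone), and conversely.\<close>
lemma message_step:
  assumes P: "P \<subseteq> outer_edges" and a: "a \<in> Ball" "0 < depth a" "depth a < n"
  shows "(\<And>c. c \<in> children a \<Longrightarrow> xiter adj mu t m c a * Zwithout P c \<le> t * Zwith P c)
           \<Longrightarrow> t * Zwith P a \<le> xiter adj mu t (Suc m) a (parent a) * Zwithout P a"
    and "(\<And>c. c \<in> children a \<Longrightarrow> t * Zwith P c \<le> xiter adj mu t m c a * Zwithout P c)
           \<Longrightarrow> xiter adj mu t (Suc m) a (parent a) * Zwithout P a \<le> t * Zwith P a"
proof -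
  let ?x = "local_weights (xiter adj mu t m) a"
  let ?p = "\<lambda>e. t * Zwith P (other a e)" and ?q = "\<lambda>e. Zwithout P (other a e)"
  have cm: "cavity_monotone (inc a) (mu a)" using local_cavity_monotone a Ball_V by auto
  note local = inner_vertex[OF P a]
  have child: "other a e \<in> children a \<and> ?x e = xiter adj mu t m (other a e) a" if "e \<in> child_edges a" for e
    using other_child_edge[OF that a(1)] child_message[OF that a(1)] children_parent[OF _ a(1)] by auto
  have pq: "0 \<le> ?p e \<and> 0 \<le> ?q e" if "e \<in> child_edges a" for e
    using child[OF that] children_parent[OF _ a(1)] subtree_sums_nonneg[of "other a e" P] t_pos
    by (auto intro: mult_nonneg_nonneg)
  have x: "\<forall>f\<in>inc a - {parent_edge a}. 0 \<le> ?x f" using local_weights_nonneg by simp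
  show "t * Zwith P a \<le> xiter adj mu t (Suc m) a (parent a) * Zwithout P a"
    if below: "\<And>c. c \<in> children a \<Longrightarrow> xiter adj mu t m c a * Zwithout P c \<le> t * Zwith P c"
  proof -
    have "\<forall>f\<in>inc a - {parent_edge a}. 0 \<le> ?p f \<and> 0 \<le> ?q f \<and> ?x f * ?q f \<le> ?p f"
      using pq child below unfolding local(2) by auto
    from cavity_hpoly_upper[OF cm local(1) x this]
    have "Zwith P a \<le> cavity_ratio (inc a) (mu a) (parent_edge a) ?x * Zwithout P a"
      unfolding local(2,3,4) .
    then show ?thesis unfolding local(5) using t_pos by (simp add: mult.assoc)
  qed
  show "xiter adj mu t (Suc m) a (parent a) * Zwithout P a \<le> t * Zwith P a"
    if above: "\<And>c. c \<in> children a \<Longrightarrow> t * Zwith P c \<le> xiter adj mu t m c a * Zwithout P c"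
  proof -
    have "\<forall>f\<in>inc a - {parent_edge a}. 0 \<le> ?p f \<and> 0 \<le> ?q f \<and> ?p f \<le> ?x f * ?q f"
      using pq child above unfolding local(2) by auto
    from cavity_hpoly_lower[OF cm local(1) x this]
    have "cavity_ratio (inc a) (mu a) (parent_edge a) ?x * Zwithout P a \<le> Zwith P a"
      unfolding local(2,3,4) .
    then show ?thesis unfolding local(5) using t_pos by (simp add: mult.assoc)
  qed
qed

lemma message_bounds:
  assumes P: "P \<subseteq> outer_edges"
  shows "a \<in> Ball \<Longrightarrow> 0 < depth a \<Longrightarrow> depth a + m \<le> n \<Longrightarrow>
     (even m \<longrightarrow> xiter adj mu t m a (parent a) * Zwithout P a \<le> t * Zwith P a) \<and>
     (odd m \<longrightarrow> t * Zwith P a \<le> xiter adj mu t m a (parent a) * Zwithout P a)"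
proof (induction m arbitrary: a)
  case 0
  then show ?case using subtree_sums_nonneg[of a P] t_pos by (auto intro: mult_nonneg_nonneg)
next
  case (Suc m)
  have children: "c \<in> Ball \<and> 0 < depth c \<and> depth c + m \<le> n \<and> parent c = a" if "c \<in> children a" for c
    using children_parent[OF that Suc.prems(1)] Suc.prems(3) by auto
  have "depth a < n" using Suc.prems(3) by simp
  note step = message_step[OF P Suc.prems(1,2) this]
  show ?case
  proof (cases "even m")
    case True
    have "xiter adj mu t m c a * Zwithout P c \<le> t * Zwith P c" if "c \<in> children a" for c
      using Suc.IH[of c] children[OF that] True by auto
    then show ?thesis using step(1) True by simp
  next
    case False
    have "t * Zwith P c \<le> xiter adj mu t m c a * Zwithout P c" if "c \<in> children a" for c
      using Suc.IH[of c] children[OF that] False by auto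
    then show ?thesis using step(2) False by simp
  qed
qed

section \<open>The mean degree of the root\<close>

text \<open>Conditionally on the outer edges, the mean number of root edges is a homogenised mean size
  of the root measure, evaluated at the subtree sums of the root's children; the message bounds
  at depth 1 then compare it with U at the iterates.\<close>
lemma ball_sum_root_bounds:
  assumes P: "P \<subseteq> outer_edges" and m: "Suc m \<le> n"
  shows "even m \<Longrightarrow> Um (inc r) (mu r) (local_weights (xiter adj mu t m) r) * ball_sum P (\<lambda>S. 1)
                        \<le> ball_sum P (\<lambda>S. real (card S))"
    and "odd m \<Longrightarrow> ball_sum P (\<lambda>S. real (card S))
                        \<le> Um (inc r) (mu r) (local_weights (xiter adj mu t m) r) * ball_sum P (\<lambda>S. 1)"
proof -
  let ?x = "local_weights (xiter adj mu t m) r"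
  let ?p = "\<lambda>e. t * Zwith P (other r e)" and ?q = "\<lambda>e. Zwithout P (other r e)"
  have inc_r: "inc r = child_edges r" using inc_inner[OF root_Ball] m depth_root by simp
  then have "inc r \<subseteq> ball_edges" using inc_ball_edges[OF root_Ball] by blast
  then have "P \<inter> inc r = {}" using P unfolding outer_edges_def by auto
  then have sums: "ball_sum P g = subset_hpoly (inc r) (\<lambda>S. mu r S * g S) ?p ?q" for g
    using ball_sum_level_1 level_sum_root m by simp
  have child: "other r e \<in> Ball \<and> depth (other r e) = 1 \<and> parent (other r e) = r
      \<and> ?x e = xiter adj mu t m (other r e) (parent (other r e))" if "e \<in> inc r" for e
    using that other_child_edge[OF _ root_Ball] children_parent[OF _ root_Ball] child_message[OF _ root_Ball]
    unfolding inc_r depth_root by auto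
  have pq: "0 \<le> ?p e \<and> 0 \<le> ?q e" if "e \<in> inc r" for e
    using child[OF that] subtree_sums_nonneg[of "other r e" P] t_pos by (auto intro: mult_nonneg_nonneg)
  have bounds: "(even m \<longrightarrow> ?x e * ?q e \<le> ?p e) \<and> (odd m \<longrightarrow> ?p e \<le> ?x e * ?q e)" if "e \<in> inc r" for e
    using message_bounds[OF P, of "other r e" m] child[OF that] m by auto
  have cm: "cavity_monotone (inc r) (mu r)" by (rule local_cavity_monotone[OF root_V])
  have x: "\<forall>e\<in>inc r. 0 \<le> ?x e" using local_weights_nonneg by simp
  show "even m \<Longrightarrow> Um (inc r) (mu r) ?x * ball_sum P (\<lambda>S. 1) \<le> ball_sum P (\<lambda>S. real (card S))"
    unfolding sums using pq bounds by (simp add: Um_hpoly_lower[OF cm x])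
  show "odd m \<Longrightarrow> ball_sum P (\<lambda>S. real (card S)) \<le> Um (inc r) (mu r) ?x * ball_sum P (\<lambda>S. 1)"
    unfolding sums using pq bounds by (simp add: Um_hpoly_upper[OF cm x])
qed

lemma outer_weight_nonneg: "P \<subseteq> outer_edges \<Longrightarrow> 0 \<le> outer_weight P"
  unfolding outer_weight_def using t_pos
  by (intro mult_nonneg_nonneg prod_nonneg cavity_monotoneD(2)[OF local_cavity_monotone]) auto

lemma Z_net_pos: "0 < Z_net V adj mu t"
  unfolding Z_net_def
proof (rule sum_pos2[of _ "{}"])
  show "finite (Pow (edges adj))" using finite_edges by simp
  show "0 < global_measure V adj mu {} * t ^ card {}"
    unfolding global_measure_def
    using cavity_monotoneD(3)[OF local_cavity_monotone] by (simp add: prod_pos)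
  show "0 \<le> global_measure V adj mu F * t ^ card F" if "F \<in> Pow (edges adj)" for F
    unfolding global_measure_def using t_pos
    by (intro mult_nonneg_nonneg prod_nonneg cavity_monotoneD(2)[OF local_cavity_monotone]) auto
qed simp

text \<open>Averaging the conditional bounds over the outer configurations.\<close>
theorem root_degree_bounds:
  assumes m: "Suc m \<le> n"
  shows "even m \<Longrightarrow> Um (inc r) (mu r) (local_weights (xiter adj mu t m) r)
                        \<le> E_net V adj mu t (\<lambda>F. real (card (F \<inter> inc r)))"
    and "odd m \<Longrightarrow> E_net V adj mu t (\<lambda>F. real (card (F \<inter> inc r)))
                        \<le> Um (inc r) (mu r) (local_weights (xiter adj mu t m) r)"
proof -
  let ?U = "Um (inc r) (mu r) (local_weights (xiter adj mu t m) r)"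
  let ?Z = "\<lambda>g. \<Sum>P\<in>Pow outer_edges. outer_weight P * ball_sum P g"
  have n: "1 \<le> n" using m by simp
  have E: "E_net V adj mu t (\<lambda>F. real (card (F \<inter> inc r))) = ?Z (\<lambda>S. real (card S)) / ?Z (\<lambda>S. 1)"
    unfolding E_net_def partition_sum_split[OF n, symmetric]
    using partition_sum_split[OF n, of "\<lambda>S. 1"] by (simp add: Z_net_def)
  have Z: "0 < ?Z (\<lambda>S. 1)"
    using Z_net_pos partition_sum_split[OF n, of "\<lambda>S. 1"] by (simp add: Z_net_def)
  have scaled: "?U * ?Z (\<lambda>S. 1) = (\<Sum>P\<in>Pow outer_edges. outer_weight P * (?U * ball_sum P (\<lambda>S. 1)))"
    by (simp add: sum_distrib_left mult_ac)
  show "even m \<Longrightarrow> ?U \<le> E_net V adj mu t (\<lambda>F. real (card (F \<inter> inc r)))"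
  proof -
    assume "even m"
    then have "?U * ?Z (\<lambda>S. 1) \<le> ?Z (\<lambda>S. real (card S))"
      unfolding scaled using ball_sum_root_bounds(1)[OF _ m] outer_weight_nonneg
      by (intro sum_mono mult_left_mono) auto
    then show ?thesis unfolding E using Z by (simp add: le_divide_eq)
  qed
  show "odd m \<Longrightarrow> E_net V adj mu t (\<lambda>F. real (card (F \<inter> inc r))) \<le> ?U"
  proof -
    assume "odd m"
    then have "?Z (\<lambda>S. real (card S)) \<le> ?U * ?Z (\<lambda>S. 1)"
      unfolding scaled using ball_sum_root_bounds(2)[OF _ m] outer_weight_nonneg
      by (intro sum_mono mult_left_mono) auto
    then show ?thesis unfolding E using Z by (simp add: divide_le_eq)
  qed
qed

end

text \<open>The main theorem: the radius 2k + 2 allows the even iterate 2k and the odd iterate 2k + 1.\<close>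
theorem mainTheorem7:
  fixes V :: "'v set" and adj :: "'v \<Rightarrow> 'v \<Rightarrow> bool"
    and mu :: "'v \<Rightarrow> 'v set set \<Rightarrow> real" and root :: 'v
    and k :: nat and t :: real
  assumes "finite V" and "simple_graph V adj" and "root \<in> V"
    and "cavity_monotone_network V adj mu"
    and "ball_is_tree V adj root (2 * k + 2)"
    and "t > 0"
  shows "Um (inc_edges adj root) (mu root) (local_weights (xiter adj mu t (2 * k)) root)
           \<le> E_net V adj mu t (\<lambda>F. real (card (F \<inter> inc_edges adj root)))
       \<and> E_net V adj mu t (\<lambda>F. real (card (F \<inter> inc_edges adj root)))
           \<le> Um (inc_edges adj root) (mu root) (local_weights (xiter adj mu t (2 * k + 1)) root)"
proof -
  interpret ball_tree_network V adj root "2 * k + 2" mu t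
    using assms by unfold_locales
  show ?thesis using root_degree_bounds(1)[of "2 * k"] root_degree_bounds(2)[of "2 * k + 1"] by simp
qed

end
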